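(* Let $(\mu_n)_n\subset\mathcal P_2^L(\mathbb T^d\times\mathbb R)$ and $\mu\in\mathcal P_2^L(\mathbb T^d\times\mathbb R)$. Then $W^L(\mu_n,\mu)\to0$ if and only if (i) $\int|\theta|^2d\mu_n\to\int|\theta|^2d\mu$, and (ii) every subsequence $(\mu_k)_k$ has a further subsequence $(\mu_{k_l})_l$ and a Lebesgue-null set $\mathcal N\subset\mathbb T^d$ such that $\mu^x_{k_l}\rightharpoonup\mu^x$ weakly for all $x\in\mathbb T^d\setminus\mathcal N$.
   Context: $d\ge1$, $\mathbb T^d$ unit torus with Lebesgue measure $dx$. $\mathcal M_1^L(\mathbb T^d\times\mathbb R)$: Borel probability measures on $\mathbb T^d\times\mathbb R$ with first marginal $dx$; each disintegrates as $\mu=\mu^xdx$ with a measurable family of probability measures $\mu^x$ on $\mathbb R$. $\mathcal P_2^L=\{\mu\in\mathcal M_1^L:\int|\theta|^2d\mu<\infty\}$, $W^L(\mu,\nu)^2=\int_{\mathbb T^d}W_2(\mu^x,\nu^x)^2dx$ with $W_2$ the quadratic Wasserstein distance on $\mathcal P_2(\mathbb R)$. *)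

theory Defs
  imports "HOL-Probability.Probability"
begin

text \<open>The torus T^d is represented measure-theoretically by the half-open unit cube
  [0,1)^d in real^'d (a fundamental domain), with Lebesgue (Borel) measure.\<close>

definition torus_set :: "(real ^ 'd) set" where
  "torus_set = {x. \<forall>i. 0 \<le> x $ i \<and> x $ i < 1}"

definition torus :: "(real ^ 'd) measure" where
  "torus = restrict_space lborel torus_set"

definition M1L :: "((real ^ 'd) \<times> real) measure set" where
  "M1L = {M. sets M = sets (torus \<Otimes>\<^sub>M (borel :: real measure)) \<and> prob_space M
              \<and> distr M torus fst = torus}"

definition P2L :: "((real ^ 'd) \<times> real) measure set" where
  "P2L = {M. M \<in> M1L \<and> (\<integral>\<^sup>+ z. ennreal ((snd z)\<^sup>2) \<partial>M) < \<infinity>}"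

definition disintegration :: "((real ^ 'd) \<times> real) measure \<Rightarrow> ((real ^ 'd) \<Rightarrow> real measure) \<Rightarrow> bool" where
  "disintegration M K \<longleftrightarrow>
     K \<in> measurable torus (prob_algebra (borel :: real measure)) \<and>
     (\<forall>A \<in> sets M. emeasure M A = (\<integral>\<^sup>+ x. emeasure (K x) (Pair x -` A) \<partial>torus))"

definition couplings :: "real measure \<Rightarrow> real measure \<Rightarrow> (real \<times> real) measure set" where
  "couplings \<mu> \<nu> = {\<pi>. sets \<pi> = sets (borel \<Otimes>\<^sub>M (borel :: real measure)) \<and> prob_space \<pi> \<and>
                      distr \<pi> borel fst = \<mu> \<and> distr \<pi> borel snd = \<nu>}"

definition W2sq :: "real measure \<Rightarrow> real measure \<Rightarrow> ennreal" where
  "W2sq \<mu> \<nu> = (INF \<pi> \<in> couplings \<mu> \<nu>. \<integral>\<^sup>+ p. ennreal ((fst p - snd p)\<^sup>2) \<partial>\<pi>)"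

definition W2 :: "real measure \<Rightarrow> real measure \<Rightarrow> real" where
  "W2 \<mu> \<nu> = sqrt (enn2real (W2sq \<mu> \<nu>))"

definition WL :: "((real ^ 'd) \<Rightarrow> real measure) \<Rightarrow> ((real ^ 'd) \<Rightarrow> real measure) \<Rightarrow> real" where
  "WL K L = sqrt (enn2real (\<integral>\<^sup>+ x. ennreal ((W2 (K x) (L x))\<^sup>2) \<partial>torus))"

definition weakly_conv :: "(nat \<Rightarrow> real measure) \<Rightarrow> real measure \<Rightarrow> bool" where
  "weakly_conv \<mu>s \<mu> \<longleftrightarrow>
     (\<forall>f :: real \<Rightarrow> real. continuous_on UNIV f \<longrightarrow> bounded (range f) \<longrightarrow>
        (\<lambda>n. \<integral> t. f t \<partial>(\<mu>s n)) \<longlonglongrightarrow> (\<integral> t. f t \<partial>\<mu>))"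

end

theory Submission
  imports Defs
begin

text \<open>Everything is reduced to the fibres: \<open>W\<^sup>L(\<mu>, \<nu>)\<^sup>2\<close> is the integral over the torus of
  \<open>W\<^sub>2(\<mu>\<^sup>x, \<nu>\<^sup>x)\<^sup>2\<close>, so the theorem follows from estimates for \<open>W\<^sub>2\<close> on \<open>\<real>\<close> integrated in \<open>x\<close>.

  If \<open>W\<^sup>L(\<mu>\<^sub>n, \<mu>) \<rightarrow> 0\<close>: the inequality \<open>m\<^sub>2(P) \<le> (1 + e) m\<^sub>2(Q) + (1 + 1/e) W\<^sub>2(P, Q)\<^sup>2\<close> for second
  moments integrates to (i). For a Lipschitz test function, \<open>W\<^sub>2(P, Q)\<^sup>2\<close> bounds the difference of its
  integrals; along a subsequence with \<open>W\<^sup>L(\<mu>\<^sub>n\<^sub>l, \<mu>)\<^sup>2 \<le> 4\<^sup>-\<^sup>l\<close> these differences are summable in \<open>L\<^sup>1\<close>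
  for every piecewise linear cut-off with rational nodes, hence vanish almost everywhere, and these
  countably many test functions determine weak convergence.

  Conversely, by the subsequence criterion it suffices to treat a subsequence along which
  \<open>\<mu>\<^sub>n\<^sup>x \<rightharpoonup> \<mu>\<^sup>x\<close> for almost every \<open>x\<close>. On each fibre, Skorohod's representation bounds \<open>W\<^sub>2\<^sup>2\<close> by a
  truncated squared displacement, which tends to zero, plus twice the tail moments \<open>\<integral> (\<theta>\<^sup>2 - R\<^sup>2)\<^sup>+\<close>
  of both measures. Convergence of second moments and weak convergence make the integrated tails of
  \<open>\<mu>\<^sub>n\<close> converge to those of \<open>\<mu>\<close>, which are small for large \<open>R\<close>. As \<open>x \<mapsto> W\<^sub>2(\<mu>\<^sub>n\<^sup>x, \<mu>\<^sup>x)\<close> need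
  not be measurable, all integrals of it are lower integrals.\<close>

lemma nn_integral_measurable_minorant:
  assumes "(\<integral>\<^sup>+ x. f x \<partial>M) < \<infinity>" and "0 < e"
  obtains g where "g \<in> borel_measurable M" "\<And>x. g x \<le> f x"
    "(\<integral>\<^sup>+ x. f x \<partial>M) \<le> (\<integral>\<^sup>+ x. g x \<partial>M) + ennreal e"
proof (cases "(\<integral>\<^sup>+ x. f x \<partial>M) \<le> ennreal e")
  case True
  then show ?thesis by (intro that[of "\<lambda>_. 0"]) auto
next
  case False
  obtain r where r: "(\<integral>\<^sup>+ x. f x \<partial>M) = ennreal r" "0 \<le> r"
    using assms(1) by (cases "\<integral>\<^sup>+ x. f x \<partial>M") auto
  have "e < r" using False r \<open>0 < e\<close> by (auto simp: not_le ennreal_less_iff)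
  then have "ennreal (r - e) < (\<integral>\<^sup>+ x. f x \<partial>M)" using r \<open>0 < e\<close> by (auto simp: ennreal_less_iff)
  then obtain g where g: "simple_function M g" "g \<le> f" and lt: "ennreal (r - e) < integral\<^sup>S M g"
    unfolding nn_integral_def less_SUP_iff by blast
  have "ennreal r = ennreal (r - e) + ennreal e"
    using \<open>e < r\<close> \<open>0 < e\<close> by (simp flip: ennreal_plus)
  also have "\<dots> \<le> (\<integral>\<^sup>+ x. g x \<partial>M) + ennreal e"
    using lt nn_integral_eq_simple_integral[OF g(1)] by (intro add_right_mono) simp
  finally show ?thesis
    using g r by (intro that borel_measurable_simple_function) (auto simp: le_fun_def)
qed

lemma LIMSEQ_fast_subseq:
  fixes a :: "nat \<Rightarrow> real"
  assumes "a \<longlonglongrightarrow> 0" and "0 < q"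
  obtains s where "strict_mono s" "\<And>l. \<bar>a (s l)\<bar> < q ^ l"
proof -
  have "\<forall>l. \<exists>N. \<forall>n\<ge>N. \<bar>a n\<bar> < q ^ l"
    using LIMSEQ_D[OF assms(1)] \<open>0 < q\<close> by simp
  then obtain N where N: "\<And>l n. N l \<le> n \<Longrightarrow> \<bar>a n\<bar> < q ^ l" by metis
  define s where "s l = l + (\<Sum>i\<le>l. N i)" for l
  have "strict_mono s" unfolding strict_mono_Suc_iff s_def by simp
  moreover have "N l \<le> s l" for l
    using member_le_sum[of l "{..l}" N] unfolding s_def by simp
  ultimately show ?thesis using N that by blast
qed

lemma LIMSEQ_iff_subseq_subseq:
  fixes a :: "nat \<Rightarrow> 'a::metric_space"
  shows "a \<longlonglongrightarrow> L \<longleftrightarrow> (\<forall>r :: nat \<Rightarrow> nat. strict_mono r \<longrightarrow> (\<exists>s. strict_mono s \<and> (\<lambda>l. a (r (s l))) \<longlonglongrightarrow> L))"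
proof
  assume "a \<longlonglongrightarrow> L"
  show "\<forall>r :: nat \<Rightarrow> nat. strict_mono r \<longrightarrow> (\<exists>s. strict_mono s \<and> (\<lambda>l. a (r (s l))) \<longlonglongrightarrow> L)"
  proof (intro allI impI)
    fix r :: "nat \<Rightarrow> nat" assume "strict_mono r"
    then have "(\<lambda>l. a (r (id l))) \<longlonglongrightarrow> L"
      using LIMSEQ_subseq_LIMSEQ[OF \<open>a \<longlonglongrightarrow> L\<close>] by (simp add: comp_def)
    then show "\<exists>s. strict_mono s \<and> (\<lambda>l. a (r (s l))) \<longlonglongrightarrow> L"
      by (intro exI[of _ id]) (simp add: strict_mono_def)
  qed
next
  assume sub: "\<forall>r :: nat \<Rightarrow> nat. strict_mono r \<longrightarrow> (\<exists>s. strict_mono s \<and> (\<lambda>l. a (r (s l))) \<longlonglongrightarrow> L)"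
  show "a \<longlonglongrightarrow> L"
  proof (rule ccontr)
    assume "\<not> a \<longlonglongrightarrow> L"
    then obtain e where "0 < e" and frequent: "\<forall>N. \<exists>n\<ge>N. e \<le> dist (a n) L"
      unfolding lim_sequentially by (auto simp: not_less)
    then have "infinite {n. e \<le> dist (a n) L}"
      unfolding infinite_nat_iff_unbounded_le by auto
    then obtain r :: "nat \<Rightarrow> nat" where r: "strict_mono r" "\<And>n. e \<le> dist (a (r n)) L"
      using infinite_enumerate by blast
    then obtain s where "(\<lambda>l. a (r (s l))) \<longlonglongrightarrow> L" using sub by blast
    then obtain l where "dist (a (r (s l))) L < e"
      using \<open>0 < e\<close> by (auto simp: lim_sequentially)
    with r(2) show False by (simp add: not_le[symmetric])
  qed
qed

lemma AE_tendsto_zero_of_nn_integral_geometric: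
  fixes h :: "nat \<Rightarrow> 'a \<Rightarrow> real"
  assumes [measurable]: "\<And>l. h l \<in> borel_measurable M" and nonneg: "\<And>l x. 0 \<le> h l x"
    and bound: "\<And>l. (\<integral>\<^sup>+ x. ennreal (h l x) \<partial>M) \<le> ennreal (C * (1/2)^l)" and "0 \<le> C"
  shows "AE x in M. (\<lambda>l. h l x) \<longlonglongrightarrow> 0"
proof -
  have "(\<integral>\<^sup>+ x. (\<Sum>l. ennreal (h l x)) \<partial>M) = (\<Sum>l. \<integral>\<^sup>+ x. ennreal (h l x) \<partial>M)"
    by (rule nn_integral_suminf) simp
  also have "\<dots> \<le> (\<Sum>l. ennreal (C * (1/2)^l))" by (intro suminf_le bound) auto
  also have "\<dots> = ennreal (\<Sum>l. C * (1/2)^l)"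
    using \<open>0 \<le> C\<close> by (intro suminf_ennreal2) (auto intro!: summable_mult summable_geometric)
  finally have "AE x in M. (\<Sum>l. ennreal (h l x)) \<noteq> \<infinity>"
    by (intro nn_integral_PInf_AE) (auto simp: top_unique)
  then show ?thesis
  proof eventually_elim
    case (elim x)
    then have "summable (\<lambda>l. h l x)" by (intro summable_suminf_not_top) (auto simp: nonneg)
    then show ?case by (rule summable_LIMSEQ_zero)
  qed
qed

lemma ennreal_le_ennreal_diff_add: "0 \<le> c \<Longrightarrow> ennreal a \<le> ennreal (a - c) + ennreal c"
proof (cases "c \<le> a")
  case False
  then have "ennreal a \<le> ennreal c" by (intro ennreal_leI) simp
  then show ?thesis by (simp add: add_increasing)
qed (simp flip: ennreal_plus)

lemma nn_integral_affine_minorant_le: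
  assumes "prob_space M" and [measurable]: "h \<in> borel_measurable M"
    and "0 < \<delta>" "0 \<le> c" and minorant: "\<And>x. x \<in> space M \<Longrightarrow> ennreal (\<delta> * h x - c) \<le> w x"
  shows "ennreal \<delta> * (\<integral>\<^sup>+ x. ennreal (h x) \<partial>M) \<le> (\<integral>\<^sup>+ x. w x \<partial>M) + ennreal c"
proof -
  interpret prob_space M by fact
  have "ennreal \<delta> * (\<integral>\<^sup>+ x. ennreal (h x) \<partial>M) = (\<integral>\<^sup>+ x. ennreal (\<delta> * h x) \<partial>M)"
    using \<open>0 < \<delta>\<close> by (simp add: nn_integral_cmult[symmetric] ennreal_mult')
  also have "\<dots> \<le> (\<integral>\<^sup>+ x. ennreal (\<delta> * h x - c) + ennreal c \<partial>M)"
    using \<open>0 \<le> c\<close> by (intro nn_integral_mono ennreal_le_ennreal_diff_add)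
  also have "\<dots> = (\<integral>\<^sup>+ x. ennreal (\<delta> * h x - c) \<partial>M) + ennreal c"
    by (simp add: nn_integral_add emeasure_space_1)
  also have "\<dots> \<le> (\<integral>\<^sup>+ x. w x \<partial>M) + ennreal c"
    using minorant by (intro add_right_mono nn_integral_mono) auto
  finally show ?thesis .
qed

text \<open>Choosing the weight \<open>e\<close> depending on \<open>n\<close> (of order \<open>\<surd>(i n)\<close>) makes both error terms vanish.\<close>
lemma tendsto_of_weighted_bounds:
  fixes a i :: "nat \<Rightarrow> real"
  assumes upper: "\<And>e n. 0 < e \<Longrightarrow> a n \<le> (1 + e) * b + (1 + 1/e) * i n"
    and lower: "\<And>e n. 0 < e \<Longrightarrow> b \<le> (1 + e) * a n + (1 + 1/e) * i n"
    and "i \<longlonglongrightarrow> 0" and nonneg: "\<And>n. 0 \<le> i n"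
  shows "a \<longlonglongrightarrow> b"
proof -
  define e where "e n = sqrt (i n) + 1 / Suc n" for n
  have e_pos: "0 < e n" for n using nonneg[of n] by (simp add: e_def add_nonneg_pos)
  have err: "(1 + 1 / e n) * i n \<le> i n + sqrt (i n)" for n
  proof -
    have "i n = sqrt (i n) * sqrt (i n)" using nonneg[of n] by simp
    also have "\<dots> \<le> sqrt (i n) * e n" using nonneg[of n] by (intro mult_left_mono) (auto simp: e_def)
    finally have "i n / e n \<le> sqrt (i n)" using e_pos by (simp add: divide_le_eq)
    then show ?thesis by (simp add: distrib_right)
  qed
  have "e \<longlonglongrightarrow> sqrt 0 + 0"
    unfolding e_def by (intro tendsto_intros \<open>i \<longlonglongrightarrow> 0\<close> LIMSEQ_inverse_real_of_nat[unfolded inverse_eq_divide])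
  then have e0: "e \<longlonglongrightarrow> 0" by simp
  show ?thesis
  proof (rule tendsto_sandwich)
    have "(b - (i n + sqrt (i n))) / (1 + e n) \<le> a n" for n
    proof -
      have "b - (i n + sqrt (i n)) \<le> (1 + e n) * a n" using lower[OF e_pos[of n], of n] err[of n] by linarith
      then show ?thesis using e_pos[of n] by (simp add: pos_divide_le_eq mult.commute)
    qed
    then show "\<forall>\<^sub>F n in sequentially. (b - (i n + sqrt (i n))) / (1 + e n) \<le> a n" by simp
    have "a n \<le> (1 + e n) * b + (i n + sqrt (i n))" for n
      using upper[OF e_pos[of n], of n] err[of n] by linarith
    then show "\<forall>\<^sub>F n in sequentially. a n \<le> (1 + e n) * b + (i n + sqrt (i n))" by simp
    have "(\<lambda>n. (b - (i n + sqrt (i n))) / (1 + e n)) \<longlonglongrightarrow> (b - (0 + sqrt 0)) / (1 + 0)"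
      by (intro tendsto_intros \<open>i \<longlonglongrightarrow> 0\<close> e0) simp
    then show "(\<lambda>n. (b - (i n + sqrt (i n))) / (1 + e n)) \<longlonglongrightarrow> b" by simp
    have "(\<lambda>n. (1 + e n) * b + (i n + sqrt (i n))) \<longlonglongrightarrow> (1 + 0) * b + (0 + sqrt 0)"
      by (intro tendsto_intros \<open>i \<longlonglongrightarrow> 0\<close> e0)
    then show "(\<lambda>n. (1 + e n) * b + (i n + sqrt (i n))) \<longlonglongrightarrow> b" by simp
  qed
qed

lemma ennreal_le_diff_add: "(a::ennreal) \<le> (a - b) + b"
  by (cases "b \<le> a") (auto simp: diff_add_self_ennreal not_le intro: less_imp_le order.trans[OF _ add_increasing])

text \<open>Here \<open>w\<close> need not be measurable, \<open>\<integral>\<^sup>+\<close> then being the lower integral; only the difference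
  \<open>u - v\<close> is integrated exactly.\<close>
lemma nn_integral_le_add_cmult:
  assumes [measurable]: "u \<in> borel_measurable M" "v \<in> borel_measurable M"
    and bound: "AE x in M. u x \<le> v x + ennreal c * w x" and "0 < c" and finite: "AE x in M. v x < \<infinity>"
  shows "(\<integral>\<^sup>+ x. u x \<partial>M) \<le> (\<integral>\<^sup>+ x. v x \<partial>M) + ennreal c * (\<integral>\<^sup>+ x. w x \<partial>M)"
proof -
  have "AE x in M. ennreal (1 / c) * (u x - v x) \<le> w x"
    using bound finite
  proof eventually_elim
    case (elim x)
    then have "u x - v x \<le> ennreal c * w x" by (auto simp: ennreal_minus_le_iff)
    then have "ennreal (1 / c) * (u x - v x) \<le> ennreal (1 / c) * (ennreal c * w x)"
      by (rule mult_left_mono) simp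
    also have "\<dots> = w x" using \<open>0 < c\<close> by (simp add: mult.assoc[symmetric] ennreal_mult[symmetric])
    finally show ?case .
  qed
  then have "ennreal (1 / c) * (\<integral>\<^sup>+ x. u x - v x \<partial>M) \<le> (\<integral>\<^sup>+ x. w x \<partial>M)"
    by (subst nn_integral_cmult[symmetric]) (auto intro: nn_integral_mono_AE)
  then have "ennreal c * (ennreal (1 / c) * (\<integral>\<^sup>+ x. u x - v x \<partial>M)) \<le> ennreal c * (\<integral>\<^sup>+ x. w x \<partial>M)"
    by (rule mult_left_mono) simp
  then have diff: "(\<integral>\<^sup>+ x. u x - v x \<partial>M) \<le> ennreal c * (\<integral>\<^sup>+ x. w x \<partial>M)"
    using \<open>0 < c\<close> by (simp add: mult.assoc[symmetric] ennreal_mult[symmetric])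
  have "(\<integral>\<^sup>+ x. u x \<partial>M) \<le> (\<integral>\<^sup>+ x. (u x - v x) + v x \<partial>M)"
    by (intro nn_integral_mono ennreal_le_diff_add)
  also have "\<dots> = (\<integral>\<^sup>+ x. u x - v x \<partial>M) + (\<integral>\<^sup>+ x. v x \<partial>M)"
    by (simp add: nn_integral_add)
  finally show ?thesis using diff by (metis add.commute add_left_mono order_trans)
qed

lemma enn2real_le_affine:
  assumes "X \<le> ennreal p * Y + ennreal q * Z" "Y < \<infinity>" "Z < \<infinity>" "0 \<le> p" "0 \<le> q"
  shows "enn2real X \<le> p * enn2real Y + q * enn2real Z"
proof -
  have "ennreal p * Y + ennreal q * Z < \<infinity>" using assms(2,3) by (simp add: ennreal_mult_less_top)
  with assms(1) have "enn2real X \<le> enn2real (ennreal p * Y + ennreal q * Z)" by (simp add: enn2real_mono)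
  also have "\<dots> = p * enn2real Y + q * enn2real Z"
    using assms(2-5) by (simp add: enn2real_plus ennreal_mult_less_top enn2real_mult)
  finally show ?thesis .
qed

lemma ennreal_tendsto_zeroI:
  fixes f :: "nat \<Rightarrow> ennreal"
  assumes "\<And>e. 0 < e \<Longrightarrow> eventually (\<lambda>n. f n \<le> ennreal e) sequentially"
  shows "f \<longlonglongrightarrow> 0"
proof (rule order_tendstoI)
  fix a :: ennreal assume "0 < a"
  then obtain b where "0 < b" "b < a" using dense by blast
  then obtain e where "b = ennreal e" "0 < e" by (cases b) (auto simp: top_unique)
  show "eventually (\<lambda>n. f n < a) sequentially"
    using assms[OF \<open>0 < e\<close>] by eventually_elim (use \<open>b < a\<close> \<open>b = ennreal e\<close> in auto)
qed simp

lemma nn_integral_tendsto_zero_bounded: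
  fixes u :: "nat \<Rightarrow> 'a \<Rightarrow> ennreal"
  assumes "finite_measure M" and [measurable]: "\<And>l. u l \<in> borel_measurable M"
    and bounded: "\<And>l x. u l x \<le> ennreal C" and "0 \<le> C" and lim: "AE x in M. (\<lambda>l. u l x) \<longlonglongrightarrow> 0"
  shows "(\<lambda>l. \<integral>\<^sup>+ x. u l x \<partial>M) \<longlonglongrightarrow> 0"
proof -
  interpret finite_measure M by fact
  define v where "v l x = enn2real (u l x)" for l x
  have u_eq: "u l x = ennreal (v l x)" for l x
    using bounded[of l x] unfolding v_def by (cases "u l x") (auto simp: top_unique)
  have v_bounds: "0 \<le> v l x" "v l x \<le> C" for l x
    using bounded[of l x] \<open>0 \<le> C\<close> unfolding u_eq by (auto simp: v_def)
  have [measurable]: "v l \<in> borel_measurable M" for l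
    unfolding v_def by measurable
  have "(\<lambda>l. \<integral> x. v l x \<partial>M) \<longlonglongrightarrow> (\<integral> x. 0 \<partial>M)"
  proof (rule integral_dominated_convergence[where w="\<lambda>x. C"])
    show "AE x in M. (\<lambda>l. v l x) \<longlonglongrightarrow> 0"
      using lim unfolding v_def by eventually_elim (use tendsto_enn2real[of _ 0] in fastforce)
  qed (simp_all add: v_bounds)
  then have "(\<lambda>l. ennreal (\<integral> x. v l x \<partial>M)) \<longlonglongrightarrow> 0"
    using tendsto_ennrealI by fastforce
  moreover have "(\<integral>\<^sup>+ x. u l x \<partial>M) = ennreal (\<integral> x. v l x \<partial>M)" for l
    unfolding u_eq using v_bounds
    by (intro nn_integral_eq_integral integrable_const_bound[where B=C]) auto
  ultimately show ?thesis by simp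
qed

lemma nn_integral_truncated_diff_tendsto_zero:
  fixes g h :: "nat \<Rightarrow> 'a \<Rightarrow> ennreal"
  assumes "finite_measure M" and [measurable]: "\<And>n. g n \<in> borel_measurable M" "\<And>n. h n \<in> borel_measurable M"
    and "0 \<le> C" and dominated: "AE x in M. \<exists>f. f \<longlonglongrightarrow> 0 \<and> (\<forall>n. g n x - h n x \<le> f n)"
  shows "(\<lambda>n. \<integral>\<^sup>+ x. min (g n x - h n x) (ennreal C) \<partial>M) \<longlonglongrightarrow> 0"
proof (rule nn_integral_tendsto_zero_bounded[OF assms(1) _ _ \<open>0 \<le> C\<close>])
  show "AE x in M. (\<lambda>n. min (g n x - h n x) (ennreal C)) \<longlonglongrightarrow> 0"
    using dominated
  proof eventually_elim
    case (elim x)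
    then obtain f where f: "f \<longlonglongrightarrow> 0" "\<And>n. g n x - h n x \<le> f n" by blast
    then have "\<forall>\<^sub>F n in sequentially. min (g n x - h n x) (ennreal C) \<le> f n"
      by (simp add: min.coboundedI1)
    then show ?case by (rule tendsto_sandwich[OF _ _ tendsto_const f(1), rotated]) simp
  qed
  show "(\<lambda>x. min (g n x - h n x) (ennreal C)) \<in> borel_measurable M" for n by measurable
qed simp

text \<open>The \<open>w n\<close> need not be measurable, so the pointwise estimate cannot be integrated directly;
  instead it is applied to measurable minorants of \<open>w n\<close> that almost realise \<open>\<integral>\<^sup>+ w n\<close>.\<close>
lemma nn_integral_eventually_le_of_vanishing_excess:
  fixes w h :: "nat \<Rightarrow> 'a \<Rightarrow> ennreal"
  assumes "finite_measure M" and w_finite: "\<And>n. (\<integral>\<^sup>+ x. w n x \<partial>M) < \<infinity>"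
    and [measurable]: "\<And>n. h n \<in> borel_measurable M" and h_finite: "AE x in M. \<forall>n. h n x < \<infinity>"
    and excess: "AE x in M. \<exists>f. f \<longlonglongrightarrow> 0 \<and> (\<forall>n. f n \<le> ennreal C) \<and> (\<forall>n. w n x \<le> f n + h n x)"
    and "0 \<le> C" "0 < e"
  shows "eventually (\<lambda>n. (\<integral>\<^sup>+ x. w n x \<partial>M) \<le> (\<integral>\<^sup>+ x. h n x \<partial>M) + ennreal e) sequentially"
proof -
  have "\<exists>g. g \<in> borel_measurable M \<and> (\<forall>x. g x \<le> w n x) \<and>
      (\<integral>\<^sup>+ x. w n x \<partial>M) \<le> (\<integral>\<^sup>+ x. g x \<partial>M) + ennreal (e / 2)" for n
    by (rule nn_integral_measurable_minorant[OF w_finite[of n], of "e / 2"]) (use \<open>0 < e\<close> in auto)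
  then obtain G where [measurable]: "\<And>n. G n \<in> borel_measurable M" and G_le: "\<And>n x. G n x \<le> w n x"
    and G_approx: "\<And>n. (\<integral>\<^sup>+ x. w n x \<partial>M) \<le> (\<integral>\<^sup>+ x. G n x \<partial>M) + ennreal (e / 2)"
    by metis
  have dominated: "AE x in M. \<exists>f. f \<longlonglongrightarrow> 0 \<and> (\<forall>n. G n x - h n x \<le> f n \<and> f n \<le> ennreal C)"
    using excess h_finite
  proof eventually_elim
    case (elim x)
    then obtain f where "f \<longlonglongrightarrow> 0" "\<And>n. f n \<le> ennreal C" "\<And>n. G n x \<le> h n x + f n"
      using G_le order_trans by (metis add.commute)
    moreover have "G n x - h n x \<le> f n" if "G n x \<le> h n x + f n" for n f
      using that spec[OF elim(2), of n] by (auto simp: ennreal_minus_le_iff)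
    ultimately show ?case by blast
  qed
  then have "(\<lambda>n. \<integral>\<^sup>+ x. min (G n x - h n x) (ennreal C) \<partial>M) \<longlonglongrightarrow> 0"
    by (intro nn_integral_truncated_diff_tendsto_zero \<open>finite_measure M\<close> \<open>0 \<le> C\<close>) (auto elim: AE_mp)
  then have "eventually (\<lambda>n. (\<integral>\<^sup>+ x. min (G n x - h n x) (ennreal C) \<partial>M) < ennreal (e / 2)) sequentially"
    using \<open>0 < e\<close> by (intro order_tendstoD(2)) (auto simp: ennreal_less_zero_iff)
  then show ?thesis
  proof eventually_elim
    case (elim n)
    have "AE x in M. G n x \<le> min (G n x - h n x) (ennreal C) + h n x"
      using dominated by eventually_elim (metis ennreal_le_diff_add min.absorb1 order_trans)
    then have "(\<integral>\<^sup>+ x. G n x \<partial>M) \<le> (\<integral>\<^sup>+ x. min (G n x - h n x) (ennreal C) \<partial>M) + (\<integral>\<^sup>+ x. h n x \<partial>M)"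
      by (subst nn_integral_add[symmetric]) (auto intro: nn_integral_mono_AE)
    then have "(\<integral>\<^sup>+ x. w n x \<partial>M) \<le> ennreal (e / 2) + (\<integral>\<^sup>+ x. h n x \<partial>M) + ennreal (e / 2)"
      using G_approx[of n] elim by (meson add_mono add_right_mono order.strict_implies_order order_trans)
    also have "\<dots> = (\<integral>\<^sup>+ x. h n x \<partial>M) + ennreal e"
      using \<open>0 < e\<close> by (simp add: ac_simps flip: ennreal_plus)
    finally show ?case .
  qed
qed

lemma sqrt_enn2real_tendsto_zero_iff:
  fixes I :: "nat \<Rightarrow> ennreal"
  assumes "\<And>n. I n < \<infinity>"
  shows "(\<lambda>n. sqrt (enn2real (I n))) \<longlonglongrightarrow> 0 \<longleftrightarrow> I \<longlonglongrightarrow> 0"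
proof
  assume "(\<lambda>n. sqrt (enn2real (I n))) \<longlonglongrightarrow> 0"
  then have "(\<lambda>n. ennreal ((sqrt (enn2real (I n)))\<^sup>2)) \<longlonglongrightarrow> ennreal (0\<^sup>2)"
    by (intro tendsto_intros)
  moreover have "ennreal ((sqrt (enn2real (I n)))\<^sup>2) = I n" for n
    using assms[of n] by (cases "I n") auto
  ultimately show "I \<longlonglongrightarrow> 0" by simp
next
  assume "I \<longlonglongrightarrow> 0"
  then have "(\<lambda>n. sqrt (enn2real (I n))) \<longlonglongrightarrow> sqrt (enn2real 0)"
    by (intro tendsto_intros) simp_all
  then show "(\<lambda>n. sqrt (enn2real (I n))) \<longlonglongrightarrow> 0" by simp
qed

section \<open>The quadratic Wasserstein distance on the real line\<close>

definition second_moment :: "real measure \<Rightarrow> ennreal" where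
  "second_moment P = (\<integral>\<^sup>+ t. ennreal (t\<^sup>2) \<partial>P)"

definition transport_cost :: "(real \<times> real) measure \<Rightarrow> ennreal" where
  "transport_cost \<pi> = (\<integral>\<^sup>+ p. ennreal ((fst p - snd p)\<^sup>2) \<partial>\<pi>)"

lemma W2sq_eq_INF_transport_cost: "W2sq P Q = (INF \<pi>\<in>couplings P Q. transport_cost \<pi>)"
  unfolding W2sq_def transport_cost_def ..

lemma W2sq_le_transport_cost: "\<pi> \<in> couplings P Q \<Longrightarrow> W2sq P Q \<le> transport_cost \<pi>"
  unfolding W2sq_eq_INF_transport_cost by (rule INF_lower)

lemma couplings_prob_space: "\<pi> \<in> couplings P Q \<Longrightarrow> prob_space \<pi>"
  by (simp add: couplings_def)

lemma couplings_measurable: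
  "\<pi> \<in> couplings P Q \<Longrightarrow> h \<in> borel_measurable (borel \<Otimes>\<^sub>M borel) \<Longrightarrow> h \<in> borel_measurable \<pi>"
  using measurable_cong_sets[of \<pi> "borel \<Otimes>\<^sub>M borel" borel borel] by (auto simp: couplings_def)

lemma
  assumes \<pi>: "\<pi> \<in> couplings P Q" and [measurable]: "g \<in> borel_measurable borel"
  shows nn_integral_couplings_fst: "(\<integral>\<^sup>+ p. g (fst p) \<partial>\<pi>) = (\<integral>\<^sup>+ t. g t \<partial>P)"
    and nn_integral_couplings_snd: "(\<integral>\<^sup>+ p. g (snd p) \<partial>\<pi>) = (\<integral>\<^sup>+ t. g t \<partial>Q)"
proof -
  have "fst \<in> measurable \<pi> borel" "snd \<in> measurable \<pi> borel"
    by (simp_all add: couplings_measurable[OF \<pi>])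
  then show "(\<integral>\<^sup>+ p. g (fst p) \<partial>\<pi>) = (\<integral>\<^sup>+ t. g t \<partial>P)" "(\<integral>\<^sup>+ p. g (snd p) \<partial>\<pi>) = (\<integral>\<^sup>+ t. g t \<partial>Q)"
    using \<pi> by (auto simp: couplings_def nn_integral_distr[symmetric])
qed

lemma
  fixes f :: "real \<Rightarrow> real"
  assumes \<pi>: "\<pi> \<in> couplings P Q" and [measurable]: "f \<in> borel_measurable borel"
  shows integral_couplings_fst: "(\<integral> p. f (fst p) \<partial>\<pi>) = (\<integral> t. f t \<partial>P)"
    and integral_couplings_snd: "(\<integral> p. f (snd p) \<partial>\<pi>) = (\<integral> t. f t \<partial>Q)"
proof -
  have "fst \<in> measurable \<pi> borel" "snd \<in> measurable \<pi> borel"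
    by (simp_all add: couplings_measurable[OF \<pi>])
  then show "(\<integral> p. f (fst p) \<partial>\<pi>) = (\<integral> t. f t \<partial>P)" "(\<integral> p. f (snd p) \<partial>\<pi>) = (\<integral> t. f t \<partial>Q)"
    using \<pi> by (auto simp: couplings_def integral_distr[symmetric])
qed

lemma pair_measure_in_couplings:
  assumes "real_distribution P" "real_distribution Q"
  shows "P \<Otimes>\<^sub>M Q \<in> couplings P Q"
proof -
  interpret P: real_distribution P by fact
  interpret Q: real_distribution Q by fact
  interpret PQ: pair_prob_space P Q ..
  have "distr (P \<Otimes>\<^sub>M Q) borel fst = P"
  proof (rule measure_eqI)
    fix A assume "A \<in> sets (distr (P \<Otimes>\<^sub>M Q) borel fst)"
    then have "emeasure (distr (P \<Otimes>\<^sub>M Q) borel fst) A = emeasure (P \<Otimes>\<^sub>M Q) (A \<times> space Q)"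
      by (auto simp: emeasure_distr space_pair_measure intro!: arg_cong2[where f=emeasure])
    also have "\<dots> = emeasure P A"
      using \<open>A \<in> _\<close> by (simp add: Q.emeasure_pair_measure_Times Q.emeasure_space_1[unfolded Q.space_eq_univ])
    finally show "emeasure (distr (P \<Otimes>\<^sub>M Q) borel fst) A = emeasure P A" .
  qed simp
  moreover have "distr (P \<Otimes>\<^sub>M Q) borel snd = Q"
  proof (rule measure_eqI)
    fix A assume "A \<in> sets (distr (P \<Otimes>\<^sub>M Q) borel snd)"
    then have "emeasure (distr (P \<Otimes>\<^sub>M Q) borel snd) A = emeasure (P \<Otimes>\<^sub>M Q) (space P \<times> A)"
      by (auto simp: emeasure_distr space_pair_measure intro!: arg_cong2[where f=emeasure])
    also have "\<dots> = emeasure Q A"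
      using \<open>A \<in> _\<close> by (simp add: Q.emeasure_pair_measure_Times P.emeasure_space_1[unfolded P.space_eq_univ])
    finally show "emeasure (distr (P \<Otimes>\<^sub>M Q) borel snd) A = emeasure Q A" .
  qed simp
  ultimately show ?thesis
    by (auto simp: couplings_def intro!: sets_pair_measure_cong PQ.prob_space_axioms)
qed

text \<open>The map \<open>y \<mapsto> a + b y\<close> is monotone and continuous, so it commutes with the infimum.\<close>
lemma le_W2sq_affineI:
  assumes "couplings P Q \<noteq> {}" "0 \<le> b"
    and bound: "\<And>\<pi>. \<pi> \<in> couplings P Q \<Longrightarrow> X \<le> a + ennreal b * transport_cost \<pi>"
  shows "X \<le> a + ennreal b * W2sq P Q"
proof -
  let ?f = "\<lambda>y. a + ennreal b * y"
  have "X \<le> (INF \<pi>\<in>couplings P Q. ?f (transport_cost \<pi>))"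
    by (rule INF_greatest) (rule bound)
  also have "\<dots> = ?f (W2sq P Q)"
    unfolding W2sq_eq_INF_transport_cost image_image[symmetric, of ?f transport_cost]
  proof (rule continuous_at_Inf_mono[symmetric])
    show "mono ?f" by (auto intro!: monoI add_left_mono mult_left_mono)
    show "continuous (at_right (Inf (transport_cost ` couplings P Q))) ?f"
      unfolding continuous_within by (intro tendsto_intros ennreal_tendsto_cmult) simp_all
  qed (use assms(1) in auto)
  finally show ?thesis .
qed

lemma sq_le_weighted_sq_sum:
  fixes s t e :: real assumes "0 < e"
  shows "s\<^sup>2 \<le> (1 + e) * t\<^sup>2 + (1 + 1/e) * (s - t)\<^sup>2"
proof -
  have "(1 + e) * t\<^sup>2 + (1 + 1/e) * (s - t)\<^sup>2 - s\<^sup>2 = (e * t - (s - t))\<^sup>2 / e"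
    using assms by (simp add: field_simps power2_eq_square)
  moreover have "0 \<le> (e * t - (s - t))\<^sup>2 / e" using assms by simp
  ultimately show ?thesis by linarith
qed

lemma nn_integral_sq_le_weighted_sq_sum:
  fixes g h :: "'a \<Rightarrow> real"
  assumes [measurable]: "g \<in> borel_measurable M" "h \<in> borel_measurable M" and "0 < e"
  shows "(\<integral>\<^sup>+ x. ennreal ((g x)\<^sup>2) \<partial>M) \<le>
    ennreal (1 + e) * (\<integral>\<^sup>+ x. ennreal ((h x)\<^sup>2) \<partial>M) + ennreal (1 + 1/e) * (\<integral>\<^sup>+ x. ennreal ((g x - h x)\<^sup>2) \<partial>M)"
proof -
  have "(\<integral>\<^sup>+ x. ennreal ((g x)\<^sup>2) \<partial>M) \<le>
      (\<integral>\<^sup>+ x. ennreal (1 + e) * ennreal ((h x)\<^sup>2) + ennreal (1 + 1/e) * ennreal ((g x - h x)\<^sup>2) \<partial>M)"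
    using sq_le_weighted_sq_sum[OF \<open>0 < e\<close>] \<open>0 < e\<close>
    by (intro nn_integral_mono) (simp add: ennreal_mult[symmetric] ennreal_plus[symmetric] del: ennreal_plus)
  also have "\<dots> = ennreal (1 + e) * (\<integral>\<^sup>+ x. ennreal ((h x)\<^sup>2) \<partial>M) + ennreal (1 + 1/e) * (\<integral>\<^sup>+ x. ennreal ((g x - h x)\<^sup>2) \<partial>M)"
    by (simp add: nn_integral_add nn_integral_cmult)
  finally show ?thesis .
qed

lemma couplings_nonempty: "real_distribution P \<Longrightarrow> real_distribution Q \<Longrightarrow> couplings P Q \<noteq> {}"
  using pair_measure_in_couplings by blast

lemma
  assumes "real_distribution P" "real_distribution Q" "0 < e"
  shows second_moment_le_W2sq_left: "second_moment P \<le> ennreal (1 + e) * second_moment Q + ennreal (1 + 1/e) * W2sq P Q"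
    and second_moment_le_W2sq_right: "second_moment Q \<le> ennreal (1 + e) * second_moment P + ennreal (1 + 1/e) * W2sq P Q"
proof -
  have "0 \<le> 1 + 1/e" using \<open>0 < e\<close> by (simp add: add_nonneg_nonneg)
  then show "second_moment P \<le> ennreal (1 + e) * second_moment Q + ennreal (1 + 1/e) * W2sq P Q"
    using nn_integral_sq_le_weighted_sq_sum[of fst _ snd, OF _ _ \<open>0 < e\<close>]
    by (intro le_W2sq_affineI couplings_nonempty assms)
       (simp_all add: second_moment_def transport_cost_def couplings_measurable
         nn_integral_couplings_fst[symmetric] nn_integral_couplings_snd[symmetric])
  show "second_moment Q \<le> ennreal (1 + e) * second_moment P + ennreal (1 + 1/e) * W2sq P Q"
    using nn_integral_sq_le_weighted_sq_sum[of snd _ fst, OF _ _ \<open>0 < e\<close>] \<open>0 \<le> 1 + 1/e\<close>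
    by (intro le_W2sq_affineI couplings_nonempty assms)
       (simp_all add: second_moment_def transport_cost_def couplings_measurable power2_commute
         nn_integral_couplings_fst[symmetric] nn_integral_couplings_snd[symmetric])
qed

lemma W2sq_le_second_moments:
  assumes "real_distribution P" "real_distribution Q"
  shows "W2sq P Q \<le> 2 * second_moment P + 2 * second_moment Q"
proof -
  let ?\<pi> = "P \<Otimes>\<^sub>M Q"
  have \<pi>: "?\<pi> \<in> couplings P Q" by (rule pair_measure_in_couplings[OF assms])
  have "W2sq P Q \<le> transport_cost ?\<pi>" by (rule W2sq_le_transport_cost[OF \<pi>])
  also have "\<dots> \<le> (\<integral>\<^sup>+ p. 2 * ennreal ((fst p)\<^sup>2) + 2 * ennreal ((snd p)\<^sup>2) \<partial>?\<pi>)"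
    unfolding transport_cost_def
  proof (rule nn_integral_mono)
    fix p :: "real \<times> real"
    have "(fst p - snd p)\<^sup>2 \<le> 2 * (fst p)\<^sup>2 + 2 * (snd p)\<^sup>2"
      using sq_le_weighted_sq_sum[of 1 "fst p - snd p" "- snd p"] by simp
    then have "ennreal ((fst p - snd p)\<^sup>2) \<le> ennreal (2 * (fst p)\<^sup>2 + 2 * (snd p)\<^sup>2)"
      by (rule ennreal_leI)
    then show "ennreal ((fst p - snd p)\<^sup>2) \<le> 2 * ennreal ((fst p)\<^sup>2) + 2 * ennreal ((snd p)\<^sup>2)"
      by (simp add: ennreal_plus ennreal_mult)
  qed
  also have "\<dots> = 2 * second_moment P + 2 * second_moment Q"
  proof -
    have "(\<lambda>p. ennreal ((fst p)\<^sup>2)) \<in> borel_measurable ?\<pi>" "(\<lambda>p. ennreal ((snd p)\<^sup>2)) \<in> borel_measurable ?\<pi>"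
      by (simp_all add: couplings_measurable[OF \<pi>])
    then show ?thesis
      by (simp add: nn_integral_add nn_integral_cmult second_moment_def
          nn_integral_couplings_fst[OF \<pi>, of "\<lambda>t. ennreal (t\<^sup>2)"]
          nn_integral_couplings_snd[OF \<pi>, of "\<lambda>t. ennreal (t\<^sup>2)"])
  qed
  finally show ?thesis .
qed

lemma W2sq_finite:
  assumes "real_distribution P" "real_distribution Q" "second_moment P < \<infinity>" "second_moment Q < \<infinity>"
  shows "W2sq P Q < \<infinity>"
  using W2sq_le_second_moments[OF assms(1,2)] assms(3,4)
  by (auto simp: ennreal_mult_less_top intro: le_less_trans)

lemma ennreal_W2_sq: "W2sq P Q < \<infinity> \<Longrightarrow> ennreal ((W2 P Q)\<^sup>2) = W2sq P Q"
  unfolding W2_def by (cases "W2sq P Q") auto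

lemma abs_mult_le_sq_add: "\<bar>l\<bar> * L * \<bar>x\<bar> \<le> x\<^sup>2 + l\<^sup>2 * L\<^sup>2 / 4" for l L x :: real
proof -
  have "x\<^sup>2 + l\<^sup>2 * L\<^sup>2 / 4 - \<bar>l\<bar> * L * \<bar>x\<bar> = (\<bar>x\<bar> - \<bar>l\<bar> * L / 2)\<^sup>2"
    by (simp add: power2_eq_square field_simps abs_mult_self_eq)
  then show ?thesis by (metis diff_ge_0_iff_ge zero_le_power2)
qed

text \<open>A weak form of Kantorovich duality; the error term comes from
  \<open>\<bar>l\<bar> L \<bar>s - t\<bar> \<le> (s - t)\<^sup>2 + l\<^sup>2 L\<^sup>2 / 4\<close>.\<close>
lemma lipschitz_integral_diff_le_W2sq:
  fixes f :: "real \<Rightarrow> real"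
  assumes "real_distribution P" "real_distribution Q"
    and [measurable]: "f \<in> borel_measurable borel" and bounded: "\<And>t. \<bar>f t\<bar> \<le> B"
    and lipschitz: "\<And>s t. \<bar>f s - f t\<bar> \<le> L * \<bar>s - t\<bar>" and "0 \<le> L"
  shows "ennreal (l * ((\<integral> t. f t \<partial>P) - (\<integral> t. f t \<partial>Q)) - l\<^sup>2 * L\<^sup>2 / 4) \<le> W2sq P Q"
proof -
  have "ennreal (l * ((\<integral> t. f t \<partial>P) - (\<integral> t. f t \<partial>Q)) - l\<^sup>2 * L\<^sup>2 / 4) \<le> 0 + ennreal 1 * W2sq P Q"
  proof (rule le_W2sq_affineI[OF couplings_nonempty[OF assms(1,2)]])
    fix \<pi> assume \<pi>: "\<pi> \<in> couplings P Q"
    interpret prob_space \<pi> by (rule couplings_prob_space[OF \<pi>])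
    have [measurable]: "(\<lambda>p. f (fst p)) \<in> borel_measurable \<pi>" "(\<lambda>p. f (snd p)) \<in> borel_measurable \<pi>"
      "(\<lambda>p. (fst p - snd p)\<^sup>2) \<in> borel_measurable \<pi>"
      by (simp_all add: couplings_measurable[OF \<pi>])
    show "ennreal (l * ((\<integral> t. f t \<partial>P) - (\<integral> t. f t \<partial>Q)) - l\<^sup>2 * L\<^sup>2 / 4) \<le> 0 + ennreal 1 * transport_cost \<pi>"
    proof (cases "transport_cost \<pi> = \<infinity>")
      case False
      then have sq_int: "integrable \<pi> (\<lambda>p. (fst p - snd p)\<^sup>2)"
        unfolding transport_cost_def by (intro integrableI_nonneg) (auto simp: less_top)
      have f_int: "integrable \<pi> (\<lambda>p. f (fst p))" "integrable \<pi> (\<lambda>p. f (snd p))"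
        using bounded by (auto intro!: integrable_const_bound[where B=B])
      have "l * ((\<integral> t. f t \<partial>P) - (\<integral> t. f t \<partial>Q)) = (\<integral> p. l * (f (fst p) - f (snd p)) \<partial>\<pi>)"
        using f_int by (simp add: integral_couplings_fst[OF \<pi>] integral_couplings_snd[OF \<pi>])
      also have "\<dots> \<le> (\<integral> p. (fst p - snd p)\<^sup>2 + l\<^sup>2 * L\<^sup>2 / 4 \<partial>\<pi>)"
      proof (rule integral_mono)
        fix p :: "real \<times> real"
        have "l * (f (fst p) - f (snd p)) \<le> \<bar>l\<bar> * \<bar>f (fst p) - f (snd p)\<bar>"
          by (metis abs_ge_self abs_mult)
        also have "\<dots> \<le> \<bar>l\<bar> * (L * \<bar>fst p - snd p\<bar>)"
          by (intro mult_left_mono lipschitz) simp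
        also have "\<dots> \<le> (fst p - snd p)\<^sup>2 + l\<^sup>2 * L\<^sup>2 / 4"
          using abs_mult_le_sq_add[of l L "fst p - snd p"] by (simp add: mult.assoc)
        finally show "l * (f (fst p) - f (snd p)) \<le> (fst p - snd p)\<^sup>2 + l\<^sup>2 * L\<^sup>2 / 4" .
      qed (use f_int sq_int in auto)
      also have "\<dots> = enn2real (transport_cost \<pi>) + l\<^sup>2 * L\<^sup>2 / 4"
        using sq_int by (simp add: prob_space transport_cost_def integral_eq_nn_integral)
      finally show ?thesis
        using False by (cases "transport_cost \<pi>") (auto intro: ennreal_leI)
    qed simp
  qed simp
  then show ?thesis by simp
qed

lemma W2sq_le_nn_integral_distr:
  assumes "prob_space \<Omega>" and [measurable]: "X \<in> borel_measurable \<Omega>" "Y \<in> borel_measurable \<Omega>"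
  shows "W2sq (distr \<Omega> borel X) (distr \<Omega> borel Y) \<le> (\<integral>\<^sup>+ \<omega>. ennreal ((X \<omega> - Y \<omega>)\<^sup>2) \<partial>\<Omega>)"
proof -
  let ?\<pi> = "distr \<Omega> (borel \<Otimes>\<^sub>M borel) (\<lambda>\<omega>. (X \<omega>, Y \<omega>))"
  have "?\<pi> \<in> couplings (distr \<Omega> borel X) (distr \<Omega> borel Y)"
    using assms(1) by (auto simp: couplings_def distr_distr comp_def intro!: prob_space.prob_space_distr)
  then have "W2sq (distr \<Omega> borel X) (distr \<Omega> borel Y) \<le> transport_cost ?\<pi>"
    by (rule W2sq_le_transport_cost)
  also have "\<dots> = (\<integral>\<^sup>+ \<omega>. ennreal ((X \<omega> - Y \<omega>)\<^sup>2) \<partial>\<Omega>)"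
    by (simp add: transport_cost_def nn_integral_distr)
  finally show ?thesis .
qed

section \<open>Weak convergence and tails on the real line\<close>

lemma weakly_conv_iff_weak_conv_m:
  assumes "\<And>n. real_distribution (Ms n)" "real_distribution M"
  shows "weakly_conv Ms M \<longleftrightarrow> weak_conv_m Ms M"
proof
  assume wc: "weakly_conv Ms M"
  show "weak_conv_m Ms M"
  proof (rule integral_cts_step_conv_imp_weak_conv[OF assms])
    fix x y :: real assume "x < y"
    then have "continuous_on UNIV (cts_step x y)"
      by (intro uniformly_continuous_imp_continuous cts_step_uniformly_continuous)
    moreover have "bounded (range (cts_step x y))"
      by (rule boundedI[where B=1]) (auto simp: cts_step_def)
    ultimately show "(\<lambda>n. integral\<^sup>L (Ms n) (cts_step x y)) \<longlonglongrightarrow> integral\<^sup>L M (cts_step x y)"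
      using wc unfolding weakly_conv_def by blast
  qed
next
  assume wc: "weak_conv_m Ms M"
  show "weakly_conv Ms M"
    unfolding weakly_conv_def
  proof (intro allI impI)
    fix f :: "real \<Rightarrow> real" assume "continuous_on UNIV f" "bounded (range f)"
    then obtain B where "\<And>x. norm (f x) \<le> B" "\<And>x. isCont f x"
      by (auto simp: bounded_iff continuous_on_eq_continuous_at)
    then show "(\<lambda>n. \<integral> t. f t \<partial>Ms n) \<longlonglongrightarrow> (\<integral> t. f t \<partial>M)"
      using weak_conv_imp_integral_bdd_continuous_conv[OF assms wc] by blast
  qed
qed

lemma cts_step_measurable[measurable]: "cts_step a b \<in> borel_measurable borel"
  unfolding cts_step_def by measurable

lemma cts_step_bounds: "a < b \<Longrightarrow> 0 \<le> cts_step a b t \<and> cts_step a b t \<le> 1"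
  by (auto simp: cts_step_def field_simps)

lemma cts_step_lipschitz:
  assumes "a < b"
  shows "\<bar>cts_step a b s - cts_step a b t\<bar> \<le> 1 / (b - a) * \<bar>s - t\<bar>"
proof -
  have clamp: "cts_step a b x = min 1 (max 0 ((b - x) / (b - a)))" for x
    using assms by (auto simp: cts_step_def min_def max_def field_simps)
  have "\<bar>min 1 (max 0 u) - min 1 (max 0 v)\<bar> \<le> \<bar>u - v\<bar>" for u v :: real
    by (simp add: min_def max_def abs_if)
  moreover have "\<bar>(b - s) / (b - a) - (b - t) / (b - a)\<bar> = 1 / (b - a) * \<bar>s - t\<bar>"
    using assms by (simp add: diff_divide_distrib[symmetric] abs_minus_commute)
  ultimately show ?thesis unfolding clamp by metis
qed

context
  fixes Ms :: "nat \<Rightarrow> real measure" and M :: "real measure"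
  assumes Ms: "\<And>n. real_distribution (Ms n)" and M: "real_distribution M"
    and rat_conv: "\<And>a b. a \<in> \<rat> \<Longrightarrow> b \<in> \<rat> \<Longrightarrow> a < b \<Longrightarrow>
      (\<lambda>n. integral\<^sup>L (Ms n) (cts_step a b)) \<longlonglongrightarrow> integral\<^sup>L M (cts_step a b)"
begin

lemma limsup_cdf_le_of_rat_cts_step:
  assumes "x < y"
  shows "limsup (\<lambda>n. cdf (Ms n) x) \<le> cdf M y"
proof -
  obtain q1 where q1: "q1 \<in> \<rat>" "x < q1" "q1 < y" using Rats_dense_in_real[OF assms] by blast
  obtain q2 where q2: "q2 \<in> \<rat>" "q1 < q2" "q2 < y" using Rats_dense_in_real[OF q1(3)] by blast
  have "limsup (\<lambda>n. cdf (Ms n) x) \<le> limsup (\<lambda>n. integral\<^sup>L (Ms n) (cts_step q1 q2))"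
  proof (intro Limsup_mono always_eventually allI)
    fix n
    interpret real_distribution "Ms n" by (rule Ms)
    have "cdf (Ms n) x \<le> cdf (Ms n) q1" using q1 by (intro cdf_nondecreasing) auto
    also have "\<dots> \<le> integral\<^sup>L (Ms n) (cts_step q1 q2)" using q2 by (intro cdf_cts_step)
    finally show "ereal (cdf (Ms n) x) \<le> ereal (integral\<^sup>L (Ms n) (cts_step q1 q2))" by simp
  qed
  also have "\<dots> = integral\<^sup>L M (cts_step q1 q2)"
    using q1 q2 by (intro lim_imp_Limsup rat_conv tendsto_ereal) auto
  also have "\<dots> \<le> cdf M y"
    using q2 real_distribution.cdf_cts_step[OF M, of q1 q2]
      finite_borel_measure.cdf_nondecreasing[OF real_distribution.finite_borel_measure_M[OF M], of q2 y]
    by simp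
  finally show ?thesis .
qed

lemma cdf_le_liminf_of_rat_cts_step:
  assumes "y < x"
  shows "cdf M y \<le> liminf (\<lambda>n. cdf (Ms n) x)"
proof -
  obtain q1 where q1: "q1 \<in> \<rat>" "y < q1" "q1 < x" using Rats_dense_in_real[OF assms] by blast
  obtain q2 where q2: "q2 \<in> \<rat>" "q1 < q2" "q2 < x" using Rats_dense_in_real[OF q1(3)] by blast
  have "ereal (cdf M y) \<le> integral\<^sup>L M (cts_step q1 q2)"
    using q1 q2 real_distribution.cdf_cts_step[OF M, of q1 q2]
      finite_borel_measure.cdf_nondecreasing[OF real_distribution.finite_borel_measure_M[OF M], of y q1]
    by simp
  also have "\<dots> = liminf (\<lambda>n. integral\<^sup>L (Ms n) (cts_step q1 q2))"
    using q1 q2 by (intro lim_imp_Liminf[symmetric] rat_conv tendsto_ereal) auto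
  also have "\<dots> \<le> liminf (\<lambda>n. cdf (Ms n) x)"
  proof (intro Liminf_mono always_eventually allI)
    fix n
    interpret real_distribution "Ms n" by (rule Ms)
    have "integral\<^sup>L (Ms n) (cts_step q1 q2) \<le> cdf (Ms n) q2" using q2 by (intro cdf_cts_step)
    also have "\<dots> \<le> cdf (Ms n) x" using q2 by (intro cdf_nondecreasing) auto
    finally show "ereal (integral\<^sup>L (Ms n) (cts_step q1 q2)) \<le> ereal (cdf (Ms n) x)" by simp
  qed
  finally show ?thesis .
qed

text \<open>Unlike \<open>integral_cts_step_conv_imp_weak_conv\<close>, only countably many test functions are used,
  so that almost-everywhere convergence for each of them can be combined.\<close>
lemma weak_conv_m_of_rat_cts_step: "weak_conv_m Ms M"
  unfolding weak_conv_m_def weak_conv_def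
proof clarsimp
  interpret real_distribution M by (rule M)
  fix x assume "isCont (cdf M) x"
  then have left_cont: "continuous (at_left x) (cdf M)" by (simp add: continuous_at_split)
  have "limsup (\<lambda>n. cdf (Ms n) x) \<le> cdf M x"
  proof (rule tendsto_lowerbound)
    show "\<forall>\<^sub>F y in at_right x. limsup (\<lambda>n. ereal (cdf (Ms n) x)) \<le> ereal (cdf M y)"
      by (subst eventually_at_right[of _ "x + 1"]) (auto intro: limsup_cdf_le_of_rat_cts_step exI[of _ "x + 1"])
  qed (use cdf_is_right_cont in \<open>auto simp: continuous_within\<close>)
  moreover have "cdf M x \<le> liminf (\<lambda>n. cdf (Ms n) x)"
  proof (rule tendsto_upperbound)
    show "\<forall>\<^sub>F y in at_left x. ereal (cdf M y) \<le> liminf (\<lambda>n. ereal (cdf (Ms n) x))"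
      by (subst eventually_at_left[of "x - 1"]) (auto intro: cdf_le_liminf_of_rat_cts_step exI[of _ "x - 1"])
  qed (use left_cont in \<open>auto simp: continuous_within\<close>)
  ultimately show "(\<lambda>n. cdf (Ms n) x) \<longlonglongrightarrow> cdf M x"
    by (rule limsup_le_liminf_real)
qed

end

definition tail_sq :: "real \<Rightarrow> real \<Rightarrow> real" where
  "tail_sq R t = max (t\<^sup>2 - R\<^sup>2) 0"

definition tail_moment :: "real \<Rightarrow> real measure \<Rightarrow> ennreal" where
  "tail_moment R P = (\<integral>\<^sup>+ t. ennreal (tail_sq R t) \<partial>P)"

lemma tail_sq_measurable[measurable]: "tail_sq R \<in> borel_measurable borel"
  unfolding tail_sq_def by measurable

lemma tail_sq_nonneg: "0 \<le> tail_sq R t"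
  by (simp add: tail_sq_def)

lemma tail_sq_le_sq: "tail_sq R t \<le> t\<^sup>2"
  by (simp add: tail_sq_def)

lemma tail_moment_le_second_moment: "tail_moment R P \<le> second_moment P"
  unfolding tail_moment_def second_moment_def by (intro nn_integral_mono ennreal_leI tail_sq_le_sq)

lemma sq_diff_le_truncated_plus_tails:
  "(a - b)\<^sup>2 \<le> min ((a - b)\<^sup>2) (4 * R\<^sup>2) + 2 * tail_sq R a + 2 * tail_sq R b"
proof -
  have "(a - b)\<^sup>2 \<le> 2 * a\<^sup>2 + 2 * b\<^sup>2"
    using sq_le_weighted_sq_sum[of 1 "a - b" "- b"] by simp
  moreover have "a\<^sup>2 - R\<^sup>2 \<le> tail_sq R a" "b\<^sup>2 - R\<^sup>2 \<le> tail_sq R b"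
    by (simp_all add: tail_sq_def)
  ultimately show ?thesis using tail_sq_nonneg[of R a] tail_sq_nonneg[of R b]
    by (cases "(a - b)\<^sup>2 \<le> 4 * R\<^sup>2") (simp_all add: min_def)
qed

lemma integral_tail_sq_tendsto_zero:
  fixes f :: "'a \<Rightarrow> real"
  assumes [measurable]: "f \<in> borel_measurable M" and "integrable M (\<lambda>z. (f z)\<^sup>2)"
  shows "(\<lambda>R::nat. \<integral> z. tail_sq (real R) (f z) \<partial>M) \<longlonglongrightarrow> 0"
proof -
  have "(\<lambda>R::nat. \<integral> z. tail_sq (real R) (f z) \<partial>M) \<longlonglongrightarrow> (\<integral> z. 0 \<partial>M)"
  proof (rule integral_dominated_convergence[where w="\<lambda>z. (f z)\<^sup>2"])
    show "AE z in M. (\<lambda>R. tail_sq (real R) (f z)) \<longlonglongrightarrow> 0"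
    proof (intro AE_I2 tendsto_eventually eventually_sequentiallyI)
      fix z and R :: nat assume "nat \<lceil>\<bar>f z\<bar>\<rceil> \<le> R"
      then have "\<bar>f z\<bar> \<le> real R" by linarith
      then have "(f z)\<^sup>2 \<le> (real R)\<^sup>2" by (metis abs_le_square_iff abs_of_nat)
      then show "tail_sq (real R) (f z) = 0" by (simp add: tail_sq_def)
    qed
  qed (simp_all add: assms tail_sq_nonneg tail_sq_le_sq)
  then show ?thesis by simp
qed

text \<open>Via Skorohod's representation: realise \<open>Ms l\<close> and \<open>M\<close> by pointwise convergent random
  variables, couple them, and truncate the squared displacement at \<open>4 R\<^sup>2\<close>.\<close>
lemma weak_conv_m_W2sq_tail_bound:
  assumes "\<And>l. real_distribution (Ms l)" "real_distribution M" "weak_conv_m Ms M"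
  shows "\<exists>f. f \<longlonglongrightarrow> 0 \<and> (\<forall>l. f l \<le> ennreal (4 * R\<^sup>2)) \<and>
           (\<forall>l. W2sq (Ms l) M \<le> f l + 2 * tail_moment R (Ms l) + 2 * tail_moment R M)"
proof -
  obtain \<Omega> :: "real measure" and Ys Y where "prob_space \<Omega>"
    and [measurable]: "\<And>l. Ys l \<in> borel_measurable \<Omega>" "Y \<in> borel_measurable \<Omega>"
    and distr_Ys: "\<And>l. distr \<Omega> borel (Ys l) = Ms l" and distr_Y: "distr \<Omega> borel Y = M"
    and conv: "\<And>\<omega>. \<omega> \<in> space \<Omega> \<Longrightarrow> (\<lambda>l. Ys l \<omega>) \<longlonglongrightarrow> Y \<omega>"
    using Skorohod[OF assms] by (metis measurable_lborel1)
  interpret prob_space \<Omega> by fact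
  define f where "f l = (\<integral>\<^sup>+ \<omega>. ennreal (min ((Ys l \<omega> - Y \<omega>)\<^sup>2) (4 * R\<^sup>2)) \<partial>\<Omega>)" for l
  have "f \<longlonglongrightarrow> 0"
    unfolding f_def
  proof (rule nn_integral_tendsto_zero_bounded[where C="4 * R\<^sup>2"])
    show "AE \<omega> in \<Omega>. (\<lambda>l. ennreal (min ((Ys l \<omega> - Y \<omega>)\<^sup>2) (4 * R\<^sup>2))) \<longlonglongrightarrow> 0"
    proof (rule AE_I2)
      fix \<omega> assume "\<omega> \<in> space \<Omega>"
      then have "(\<lambda>l. min ((Ys l \<omega> - Y \<omega>)\<^sup>2) (4 * R\<^sup>2)) \<longlonglongrightarrow> min ((Y \<omega> - Y \<omega>)\<^sup>2) (4 * R\<^sup>2)"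
        by (intro tendsto_intros conv)
      then show "(\<lambda>l. ennreal (min ((Ys l \<omega> - Y \<omega>)\<^sup>2) (4 * R\<^sup>2))) \<longlonglongrightarrow> 0"
        using tendsto_ennrealI by fastforce
    qed
  qed (simp_all add: finite_measure_axioms)
  moreover have "f l \<le> ennreal (4 * R\<^sup>2)" for l
    using nn_integral_mono[of \<Omega> "\<lambda>\<omega>. ennreal (min ((Ys l \<omega> - Y \<omega>)\<^sup>2) (4 * R\<^sup>2))" "\<lambda>_. ennreal (4 * R\<^sup>2)"]
    by (simp add: f_def emeasure_space_1)
  moreover have "W2sq (Ms l) M \<le> f l + 2 * tail_moment R (Ms l) + 2 * tail_moment R M" for l
  proof -
    have "W2sq (Ms l) M \<le> (\<integral>\<^sup>+ \<omega>. ennreal ((Ys l \<omega> - Y \<omega>)\<^sup>2) \<partial>\<Omega>)"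
      using W2sq_le_nn_integral_distr[OF prob_space_axioms, of "Ys l" Y] by (simp add: distr_Ys distr_Y)
    also have "\<dots> \<le> (\<integral>\<^sup>+ \<omega>. ennreal (min ((Ys l \<omega> - Y \<omega>)\<^sup>2) (4 * R\<^sup>2)) +
        2 * ennreal (tail_sq R (Ys l \<omega>)) + 2 * ennreal (tail_sq R (Y \<omega>)) \<partial>\<Omega>)"
    proof (rule nn_integral_mono)
      fix \<omega>
      have "ennreal ((Ys l \<omega> - Y \<omega>)\<^sup>2) \<le>
          ennreal (min ((Ys l \<omega> - Y \<omega>)\<^sup>2) (4 * R\<^sup>2) + 2 * tail_sq R (Ys l \<omega>) + 2 * tail_sq R (Y \<omega>))"
        by (intro ennreal_leI sq_diff_le_truncated_plus_tails)
      then show "ennreal ((Ys l \<omega> - Y \<omega>)\<^sup>2) \<le> ennreal (min ((Ys l \<omega> - Y \<omega>)\<^sup>2) (4 * R\<^sup>2)) +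
          2 * ennreal (tail_sq R (Ys l \<omega>)) + 2 * ennreal (tail_sq R (Y \<omega>))"
        by (simp add: ennreal_plus ennreal_mult tail_sq_nonneg)
    qed
    also have "\<dots> = f l + 2 * tail_moment R (Ms l) + 2 * tail_moment R M"
      unfolding f_def tail_moment_def distr_Ys[symmetric] distr_Y[symmetric]
      by (simp add: nn_integral_add nn_integral_cmult nn_integral_distr)
    finally show ?thesis .
  qed
  ultimately show ?thesis by blast
qed

section \<open>Disintegrations over the torus\<close>

lemma space_torus: "space torus = torus_set"
  by (simp add: torus_def space_restrict_space)

lemma disintegration_measurable:
  "disintegration \<mu> K \<Longrightarrow> K \<in> measurable torus (subprob_algebra borel)"
  unfolding disintegration_def by (auto intro: measurable_prob_algebraD)

lemma disintegration_real_distribution: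
  assumes "disintegration \<mu> K" "x \<in> space torus"
  shows "real_distribution (K x)"
  using measurable_space[of K torus "prob_algebra borel" x] assms
  by (auto simp: disintegration_def space_prob_algebra real_distribution_def real_distribution_axioms_def)

lemma measurable_integral_disintegration[measurable]:
  fixes f :: "real \<Rightarrow> real"
  assumes "disintegration \<mu> K" "f \<in> borel_measurable borel"
  shows "(\<lambda>x. \<integral> t. f t \<partial>K x) \<in> borel_measurable torus"
  using measurable_compose[OF disintegration_measurable[OF assms(1)] integral_measurable_subprob_algebra[OF assms(2)]]
  by simp

lemma measurable_nn_integral_disintegration[measurable]:
  assumes "disintegration \<mu> K" "g \<in> borel_measurable (torus \<Otimes>\<^sub>M borel)"
  shows "(\<lambda>x. \<integral>\<^sup>+ \<theta>. g (x, \<theta>) \<partial>K x) \<in> borel_measurable torus"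
  using nn_integral_measurable_subprob_algebra2[of "\<lambda>x y. g (x, y)" torus borel K]
    disintegration_measurable[OF assms(1)] assms(2)
  by simp

lemma measurable_distr_Pair_disintegration:
  fixes K :: "real^'d \<Rightarrow> real measure"
  assumes "disintegration \<mu> K"
  shows "(\<lambda>x. distr (K x) (torus \<Otimes>\<^sub>M borel) (Pair x)) \<in> measurable torus (subprob_algebra (torus \<Otimes>\<^sub>M borel))"
proof (rule measurable_distr2[where M=borel])
  show "(\<lambda>(x, y). Pair x y) \<in> measurable (torus \<Otimes>\<^sub>M borel) (torus \<Otimes>\<^sub>M borel)" by simp
qed (rule disintegration_measurable[OF assms])

lemma disintegration_eq_bind:
  fixes K :: "real^'d \<Rightarrow> real measure"
  assumes sets: "sets \<mu> = sets (torus \<Otimes>\<^sub>M borel)" and D: "disintegration \<mu> K"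
  shows "\<mu> = torus \<bind> (\<lambda>x. distr (K x) (torus \<Otimes>\<^sub>M borel) (Pair x))"
proof -
  note fibres = measurable_distr_Pair_disintegration[OF D]
  have nonempty: "space torus \<noteq> {}"
    by (auto simp: space_torus torus_set_def intro!: exI[of _ 0])
  show ?thesis
  proof (rule measure_eqI)
    show "sets \<mu> = sets (torus \<bind> (\<lambda>x. distr (K x) (torus \<Otimes>\<^sub>M borel) (Pair x)))"
      using sets nonempty by (subst sets_bind) auto
    fix A assume "A \<in> sets \<mu>"
    then have A: "A \<in> sets (torus \<Otimes>\<^sub>M borel)" by (simp add: sets)
    have "emeasure \<mu> A = (\<integral>\<^sup>+ x. emeasure (K x) (Pair x -` A) \<partial>torus)"
      using D \<open>A \<in> sets \<mu>\<close> by (simp add: disintegration_def)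
    also have "\<dots> = (\<integral>\<^sup>+ x. emeasure (distr (K x) (torus \<Otimes>\<^sub>M borel) (Pair x)) A \<partial>torus)"
    proof (rule nn_integral_cong)
      fix x :: "real^'d" assume x: "x \<in> space torus"
      then interpret real_distribution "K x" by (rule disintegration_real_distribution[OF D])
      show "emeasure (K x) (Pair x -` A) = emeasure (distr (K x) (torus \<Otimes>\<^sub>M borel) (Pair x)) A"
        using x A by (subst emeasure_distr) (auto simp: measurable_Pair1')
    qed
    also have "\<dots> = emeasure (torus \<bind> (\<lambda>x. distr (K x) (torus \<Otimes>\<^sub>M borel) (Pair x))) A"
      by (rule emeasure_bind[OF nonempty fibres A, symmetric])
    finally show "emeasure \<mu> A = \<dots>" .
  qed
qed

lemma nn_integral_disintegration:
  fixes K :: "real^'d \<Rightarrow> real measure"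
  assumes "sets \<mu> = sets (torus \<Otimes>\<^sub>M borel)" "disintegration \<mu> K"
    and [measurable]: "g \<in> borel_measurable (torus \<Otimes>\<^sub>M borel)"
  shows "(\<integral>\<^sup>+ z. g z \<partial>\<mu>) = (\<integral>\<^sup>+ x. (\<integral>\<^sup>+ \<theta>. g (x, \<theta>) \<partial>K x) \<partial>torus)"
proof -
  have "(\<integral>\<^sup>+ z. g z \<partial>\<mu>) = (\<integral>\<^sup>+ x. (\<integral>\<^sup>+ z. g z \<partial>distr (K x) (torus \<Otimes>\<^sub>M borel) (Pair x)) \<partial>torus)"
    by (subst disintegration_eq_bind[OF assms(1,2)])
      (rule nn_integral_bind[OF _ measurable_distr_Pair_disintegration[OF assms(2)]], simp)
  also have "\<dots> = (\<integral>\<^sup>+ x. (\<integral>\<^sup>+ \<theta>. g (x, \<theta>) \<partial>K x) \<partial>torus)"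
  proof (rule nn_integral_cong)
    fix x :: "real^'d" assume x: "x \<in> space torus"
    then interpret real_distribution "K x" by (rule disintegration_real_distribution[OF assms(2)])
    show "(\<integral>\<^sup>+ z. g z \<partial>distr (K x) (torus \<Otimes>\<^sub>M borel) (Pair x)) = (\<integral>\<^sup>+ \<theta>. g (x, \<theta>) \<partial>K x)"
      using x by (subst nn_integral_distr) (auto simp: measurable_Pair1')
  qed
  finally show ?thesis .
qed

lemma P2L_sets: "\<mu> \<in> P2L \<Longrightarrow> sets \<mu> = sets (torus \<Otimes>\<^sub>M borel)"
  by (simp add: P2L_def M1L_def)

lemma P2L_prob_space: "\<mu> \<in> P2L \<Longrightarrow> prob_space \<mu>"
  by (simp add: P2L_def M1L_def)

lemma P2L_measurable:
  assumes "\<mu> \<in> P2L" "f \<in> borel_measurable (torus \<Otimes>\<^sub>M borel)"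
  shows "f \<in> borel_measurable \<mu>"
  using assms(2) by (simp add: measurable_cong_sets[OF P2L_sets[OF assms(1)] refl])

lemma prob_space_torus:
  fixes \<mu> :: "((real^'d) \<times> real) measure"
  assumes "\<mu> \<in> P2L"
  shows "prob_space (torus :: (real^'d) measure)"
proof -
  have "prob_space (distr \<mu> torus fst)"
    using assms by (intro prob_space.prob_space_distr P2L_prob_space)
      (simp_all add: measurable_cong_sets[OF P2L_sets[OF assms] refl])
  then show ?thesis using assms by (simp add: P2L_def M1L_def)
qed

lemma integrable_snd_sq: "\<mu> \<in> P2L \<Longrightarrow> integrable \<mu> (\<lambda>z. (snd z)\<^sup>2)"
  by (rule integrableI_nonneg, rule P2L_measurable) (simp_all add: P2L_def)

lemma nn_integral_snd_disintegration:
  fixes K :: "real^'d \<Rightarrow> real measure"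
  assumes "\<mu> \<in> P2L" "disintegration \<mu> K" and [measurable]: "g \<in> borel_measurable borel"
  shows "(\<integral>\<^sup>+ z. g (snd z) \<partial>\<mu>) = (\<integral>\<^sup>+ x. (\<integral>\<^sup>+ \<theta>. g \<theta> \<partial>K x) \<partial>torus)"
  using nn_integral_disintegration[OF P2L_sets[OF assms(1)] assms(2), of "\<lambda>z. g (snd z)"] by simp

lemma integral_snd_disintegration:
  fixes K :: "real^'d \<Rightarrow> real measure" and h :: "real \<Rightarrow> real"
  assumes "\<mu> \<in> P2L" "disintegration \<mu> K" and [measurable]: "h \<in> borel_measurable borel"
    and bounds: "\<And>t. 0 \<le> h t" "\<And>t. h t \<le> B"
  shows "(\<integral> z. h (snd z) \<partial>\<mu>) = (\<integral> x. (\<integral> t. h t \<partial>K x) \<partial>torus)"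
proof -
  have fibre: "(\<integral>\<^sup>+ t. ennreal (h t) \<partial>K x) = ennreal (\<integral> t. h t \<partial>K x)" if "x \<in> space torus" for x
  proof -
    interpret real_distribution "K x" by (rule disintegration_real_distribution[OF assms(2) that])
    show ?thesis using bounds by (intro nn_integral_eq_integral integrable_const_bound[where B=B]) auto
  qed
  have "(\<integral> z. h (snd z) \<partial>\<mu>) = enn2real (\<integral>\<^sup>+ z. ennreal (h (snd z)) \<partial>\<mu>)"
    using bounds by (intro integral_eq_nn_integral P2L_measurable[OF assms(1)]) simp_all
  also have "\<dots> = enn2real (\<integral>\<^sup>+ x. ennreal (\<integral> t. h t \<partial>K x) \<partial>torus)"
    by (simp add: nn_integral_snd_disintegration[OF assms(1,2), of "\<lambda>t. ennreal (h t)"] fibre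
        cong: nn_integral_cong)
  also have "\<dots> = (\<integral> x. (\<integral> t. h t \<partial>K x) \<partial>torus)"
    using bounds assms(2) by (intro integral_eq_nn_integral[symmetric]) auto
  finally show ?thesis .
qed

lemma nn_integral_second_moment_disintegration:
  fixes K :: "real^'d \<Rightarrow> real measure"
  assumes "\<mu> \<in> P2L" "disintegration \<mu> K"
  shows "(\<integral>\<^sup>+ x. second_moment (K x) \<partial>torus) = (\<integral>\<^sup>+ z. ennreal ((snd z)\<^sup>2) \<partial>\<mu>)"
  unfolding second_moment_def by (rule nn_integral_snd_disintegration[OF assms, symmetric]) simp

lemma measurable_second_moment_disintegration[measurable]:
  "disintegration \<mu> K \<Longrightarrow> (\<lambda>x. second_moment (K x)) \<in> borel_measurable torus"
  unfolding second_moment_def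
  using measurable_nn_integral_disintegration[of \<mu> K "\<lambda>z. ennreal ((snd z)\<^sup>2)"] by simp

lemma nn_integral_second_moment_finite:
  fixes K :: "real^'d \<Rightarrow> real measure"
  assumes "\<mu> \<in> P2L" "disintegration \<mu> K"
  shows "(\<integral>\<^sup>+ x. second_moment (K x) \<partial>torus) < \<infinity>"
  using assms(1) by (simp add: nn_integral_second_moment_disintegration[OF assms] P2L_def)

lemma AE_second_moment_finite:
  fixes K :: "real^'d \<Rightarrow> real measure"
  assumes "\<mu> \<in> P2L" "disintegration \<mu> K"
  shows "AE x in torus. second_moment (K x) < \<infinity>"
  using nn_integral_PInf_AE[OF measurable_second_moment_disintegration[OF assms(2)]]
    nn_integral_second_moment_finite[OF assms]
  by (simp add: less_top)

lemma integral_snd_sq_disintegration: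
  fixes K :: "real^'d \<Rightarrow> real measure"
  assumes "\<mu> \<in> P2L" "disintegration \<mu> K"
  shows "(\<integral> z. (snd z)\<^sup>2 \<partial>\<mu>) = enn2real (\<integral>\<^sup>+ x. second_moment (K x) \<partial>torus)"
  unfolding nn_integral_second_moment_disintegration[OF assms]
  by (intro integral_eq_nn_integral P2L_measurable[OF assms(1)]) simp_all

lemma nn_integral_tail_moment_disintegration:
  fixes K :: "real^'d \<Rightarrow> real measure"
  assumes "\<mu> \<in> P2L" "disintegration \<mu> K"
  shows "(\<integral>\<^sup>+ x. tail_moment R (K x) \<partial>torus) = ennreal (\<integral> z. tail_sq R (snd z) \<partial>\<mu>)"
proof -
  have "integrable \<mu> (\<lambda>z. tail_sq R (snd z))"
    using integrable_snd_sq[OF assms(1)] P2L_measurable[OF assms(1)]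
    by (rule Bochner_Integration.integrable_bound) (simp_all add: tail_sq_nonneg tail_sq_le_sq)
  have "(\<integral>\<^sup>+ x. tail_moment R (K x) \<partial>torus) = (\<integral>\<^sup>+ z. ennreal (tail_sq R (snd z)) \<partial>\<mu>)"
    unfolding tail_moment_def by (rule nn_integral_snd_disintegration[OF assms, symmetric]) simp
  also have "\<dots> = ennreal (\<integral> z. tail_sq R (snd z) \<partial>\<mu>)"
    using \<open>integrable \<mu> _\<close> by (rule nn_integral_eq_integral) (simp add: tail_sq_nonneg)
  finally show ?thesis .
qed

lemma measurable_tail_moment_disintegration[measurable]:
  "disintegration \<mu> K \<Longrightarrow> (\<lambda>x. tail_moment R (K x)) \<in> borel_measurable torus"
  unfolding tail_moment_def
  using measurable_nn_integral_disintegration[of \<mu> K "\<lambda>z. ennreal (tail_sq R (snd z))"] by simp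

lemma AE_W2sq_finite:
  fixes K L :: "real^'d \<Rightarrow> real measure"
  assumes "\<mu> \<in> P2L" "disintegration \<mu> K" "\<nu> \<in> P2L" "disintegration \<nu> L"
  shows "AE x in torus. W2sq (L x) (K x) < \<infinity>"
  using AE_second_moment_finite[OF assms(1,2)] AE_second_moment_finite[OF assms(3,4)] AE_space
proof eventually_elim
  case (elim x)
  then show ?case
    by (intro W2sq_finite disintegration_real_distribution[OF assms(4)] disintegration_real_distribution[OF assms(2)])
      simp_all
qed

lemma nn_integral_W2sq_finite:
  fixes K L :: "real^'d \<Rightarrow> real measure"
  assumes "\<mu> \<in> P2L" "disintegration \<mu> K" "\<nu> \<in> P2L" "disintegration \<nu> L"
  shows "(\<integral>\<^sup>+ x. W2sq (L x) (K x) \<partial>torus) < \<infinity>"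
proof -
  have "(\<integral>\<^sup>+ x. W2sq (L x) (K x) \<partial>torus) \<le> (\<integral>\<^sup>+ x. 2 * second_moment (L x) + 2 * second_moment (K x) \<partial>torus)"
    using assms(2,4) by (intro nn_integral_mono W2sq_le_second_moments disintegration_real_distribution)
  also have "\<dots> = 2 * (\<integral>\<^sup>+ x. second_moment (L x) \<partial>torus) + 2 * (\<integral>\<^sup>+ x. second_moment (K x) \<partial>torus)"
    using assms(2,4) by (simp add: nn_integral_add nn_integral_cmult)
  also have "\<dots> < \<infinity>"
    using nn_integral_second_moment_finite[OF assms(1,2)] nn_integral_second_moment_finite[OF assms(3,4)]
    by (simp add: ennreal_mult_less_top)
  finally show ?thesis .
qed

lemma
  fixes K L :: "real^'d \<Rightarrow> real measure"
  assumes "\<mu> \<in> P2L" "disintegration \<mu> K" "\<nu> \<in> P2L" "disintegration \<nu> L" "0 < e"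
  shows nn_integral_second_moment_le_W2sq_left: "(\<integral>\<^sup>+ x. second_moment (L x) \<partial>torus) \<le>
      ennreal (1 + e) * (\<integral>\<^sup>+ x. second_moment (K x) \<partial>torus) + ennreal (1 + 1/e) * (\<integral>\<^sup>+ x. W2sq (L x) (K x) \<partial>torus)"
    and nn_integral_second_moment_le_W2sq_right: "(\<integral>\<^sup>+ x. second_moment (K x) \<partial>torus) \<le>
      ennreal (1 + e) * (\<integral>\<^sup>+ x. second_moment (L x) \<partial>torus) + ennreal (1 + 1/e) * (\<integral>\<^sup>+ x. W2sq (L x) (K x) \<partial>torus)"
proof -
  have "0 < 1 + 1/e" using \<open>0 < e\<close> by (simp add: add_pos_pos)
  note fibres = disintegration_real_distribution[OF assms(4)] disintegration_real_distribution[OF assms(2)]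
  have "(\<integral>\<^sup>+ x. second_moment (L x) \<partial>torus) \<le>
      (\<integral>\<^sup>+ x. ennreal (1 + e) * second_moment (K x) \<partial>torus) + ennreal (1 + 1/e) * (\<integral>\<^sup>+ x. W2sq (L x) (K x) \<partial>torus)"
  proof (rule nn_integral_le_add_cmult)
    show "AE x in torus. second_moment (L x) \<le>
        ennreal (1 + e) * second_moment (K x) + ennreal (1 + 1/e) * W2sq (L x) (K x)"
      using fibres \<open>0 < e\<close> by (intro AE_I2 second_moment_le_W2sq_left)
    show "AE x in torus. ennreal (1 + e) * second_moment (K x) < \<infinity>"
      using AE_second_moment_finite[OF assms(1,2)] by eventually_elim (simp add: ennreal_mult_less_top)
  qed (use \<open>0 < 1 + 1/e\<close> assms(2,4) in simp_all)
  then show "(\<integral>\<^sup>+ x. second_moment (L x) \<partial>torus) \<le>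
      ennreal (1 + e) * (\<integral>\<^sup>+ x. second_moment (K x) \<partial>torus) + ennreal (1 + 1/e) * (\<integral>\<^sup>+ x. W2sq (L x) (K x) \<partial>torus)"
    using assms(2) by (simp add: nn_integral_cmult)
  have "(\<integral>\<^sup>+ x. second_moment (K x) \<partial>torus) \<le>
      (\<integral>\<^sup>+ x. ennreal (1 + e) * second_moment (L x) \<partial>torus) + ennreal (1 + 1/e) * (\<integral>\<^sup>+ x. W2sq (L x) (K x) \<partial>torus)"
  proof (rule nn_integral_le_add_cmult)
    show "AE x in torus. second_moment (K x) \<le>
        ennreal (1 + e) * second_moment (L x) + ennreal (1 + 1/e) * W2sq (L x) (K x)"
      using fibres \<open>0 < e\<close> by (intro AE_I2 second_moment_le_W2sq_right)
    show "AE x in torus. ennreal (1 + e) * second_moment (L x) < \<infinity>"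
      using AE_second_moment_finite[OF assms(3,4)] by eventually_elim (simp add: ennreal_mult_less_top)
  qed (use \<open>0 < 1 + 1/e\<close> assms(2,4) in simp_all)
  then show "(\<integral>\<^sup>+ x. second_moment (K x) \<partial>torus) \<le>
      ennreal (1 + e) * (\<integral>\<^sup>+ x. second_moment (L x) \<partial>torus) + ennreal (1 + 1/e) * (\<integral>\<^sup>+ x. W2sq (L x) (K x) \<partial>torus)"
    using assms(4) by (simp add: nn_integral_cmult)
qed

lemma WL_eq_nn_integral_W2sq:
  fixes K L :: "real^'d \<Rightarrow> real measure"
  assumes "\<mu> \<in> P2L" "disintegration \<mu> K" "\<nu> \<in> P2L" "disintegration \<nu> L"
  shows "WL L K = sqrt (enn2real (\<integral>\<^sup>+ x. W2sq (L x) (K x) \<partial>torus))"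
  unfolding WL_def using AE_W2sq_finite[OF assms]
  by (intro arg_cong[where f="\<lambda>t. sqrt (enn2real t)"] nn_integral_cong_AE) (auto elim!: AE_mp simp: ennreal_W2_sq)

lemma AE_torus_iff_null_set:
  "(AE x in torus. P x) \<longleftrightarrow> (\<exists>N. N \<in> null_sets torus \<and> (\<forall>x \<in> torus_set - N. P x))"
proof
  assume "AE x in torus. P x"
  then obtain N where "{x \<in> space torus. \<not> P x} \<subseteq> N" "N \<in> null_sets torus"
    by (auto elim!: AE_E simp: null_sets_def)
  then show "\<exists>N. N \<in> null_sets torus \<and> (\<forall>x \<in> torus_set - N. P x)"
    by (auto simp: space_torus)
next
  assume "\<exists>N. N \<in> null_sets torus \<and> (\<forall>x \<in> torus_set - N. P x)"
  then obtain N where N: "N \<in> null_sets torus" and P: "\<forall>x \<in> torus_set - N. P x" by blast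
  show "AE x in torus. P x"
    using AE_not_in[OF N] AE_space by eventually_elim (use P in \<open>auto simp: space_torus\<close>)
qed

section \<open>Sequences of disintegrated measures\<close>

locale disintegrated_P2L_sequence =
  fixes \<mu>s :: "nat \<Rightarrow> ((real^'d) \<times> real) measure" and \<mu> :: "((real^'d) \<times> real) measure"
    and Ks :: "nat \<Rightarrow> real^'d \<Rightarrow> real measure" and K :: "real^'d \<Rightarrow> real measure"
  assumes P2L_seq: "\<And>n. \<mu>s n \<in> P2L" and P2L: "\<mu> \<in> P2L"
    and disint_seq: "\<And>n. disintegration (\<mu>s n) (Ks n)" and disint: "disintegration \<mu> K"
begin

lemma subsequence: "disintegrated_P2L_sequence (\<lambda>n. \<mu>s (\<phi> n)) \<mu> (\<lambda>n. Ks (\<phi> n)) K"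
  by unfold_locales (simp_all add: P2L_seq P2L disint_seq disint)

lemma integral_snd_sq_tendsto:
  assumes "(\<lambda>n. \<integral>\<^sup>+ x. W2sq (Ks n x) (K x) \<partial>torus) \<longlonglongrightarrow> 0"
  shows "(\<lambda>n. \<integral> z. (snd z)\<^sup>2 \<partial>\<mu>s n) \<longlonglongrightarrow> (\<integral> z. (snd z)\<^sup>2 \<partial>\<mu>)"
proof -
  define A where "A n = (\<integral>\<^sup>+ x. second_moment (Ks n x) \<partial>torus)" for n
  define B where "B = (\<integral>\<^sup>+ x. second_moment (K x) \<partial>torus)"
  define I where "I n = (\<integral>\<^sup>+ x. W2sq (Ks n x) (K x) \<partial>torus)" for n
  have finite: "A n < \<infinity>" "B < \<infinity>" "I n < \<infinity>" for n
    unfolding A_def B_def I_def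
    by (rule nn_integral_second_moment_finite[OF P2L_seq disint_seq]
        nn_integral_second_moment_finite[OF P2L disint] nn_integral_W2sq_finite[OF P2L disint P2L_seq disint_seq])+
  have "(\<lambda>n. enn2real (I n)) \<longlonglongrightarrow> enn2real 0"
    by (rule tendsto_enn2real) (simp_all add: I_def assms)
  then have "(\<lambda>n. enn2real (I n)) \<longlonglongrightarrow> 0" by simp
  then have "(\<lambda>n. enn2real (A n)) \<longlonglongrightarrow> enn2real B"
  proof (rule tendsto_of_weighted_bounds[rotated 2])
    fix e :: real and n assume "0 < e"
    then have "0 \<le> 1 + e" "0 \<le> 1 + 1/e" by simp_all
    note bounds = nn_integral_second_moment_le_W2sq_left[OF P2L disint P2L_seq disint_seq \<open>0 < e\<close>]
      nn_integral_second_moment_le_W2sq_right[OF P2L disint P2L_seq disint_seq \<open>0 < e\<close>]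
    show "enn2real (A n) \<le> (1 + e) * enn2real B + (1 + 1/e) * enn2real (I n)"
      using bounds(1) finite \<open>0 \<le> 1 + e\<close> \<open>0 \<le> 1 + 1/e\<close> unfolding A_def B_def I_def
      by (intro enn2real_le_affine) simp_all
    show "enn2real B \<le> (1 + e) * enn2real (A n) + (1 + 1/e) * enn2real (I n)"
      using bounds(2) finite \<open>0 \<le> 1 + e\<close> \<open>0 \<le> 1 + 1/e\<close> unfolding A_def B_def I_def
      by (intro enn2real_le_affine) simp_all
  qed simp
  then show ?thesis
    using integral_snd_sq_disintegration[OF P2L_seq disint_seq] integral_snd_sq_disintegration[OF P2L disint]
    by (simp add: A_def B_def)
qed

text \<open>With \<open>\<delta> = 2\<^sup>-\<^sup>n\<close>, the separation bound gives \<open>\<integral> \<bar>\<Delta>\<^sub>n\<bar> \<le> (1 + L\<^sup>2/4) 2\<^sup>-\<^sup>n\<close>, which is summable.\<close>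
lemma AE_cts_step_integral_tendsto:
  assumes fast: "\<And>n. (\<integral>\<^sup>+ x. W2sq (Ks n x) (K x) \<partial>torus) \<le> ennreal ((1/4)^n)" and "a < b"
  shows "AE x in torus. (\<lambda>n. \<integral> t. cts_step a b t \<partial>Ks n x) \<longlonglongrightarrow> (\<integral> t. cts_step a b t \<partial>K x)"
proof -
  interpret torus: prob_space "torus :: (real^'d) measure" by (rule prob_space_torus[OF P2L])
  define L where "L = 1 / (b - a)"
  define h where "h n x = \<bar>(\<integral> t. cts_step a b t \<partial>Ks n x) - (\<integral> t. cts_step a b t \<partial>K x)\<bar>" for n x
  have [measurable]: "h n \<in> borel_measurable torus" for n
    unfolding h_def using disint_seq disint by measurable
  have bound: "(\<integral>\<^sup>+ x. ennreal (h n x) \<partial>torus) \<le> ennreal ((1 + L\<^sup>2 / 4) * (1/2)^n)" for n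
  proof -
    define \<delta> :: real where "\<delta> = (1/2)^n"
    have "0 < \<delta>" by (simp add: \<delta>_def)
    have "ennreal \<delta> * (\<integral>\<^sup>+ x. ennreal (h n x) \<partial>torus) \<le> (\<integral>\<^sup>+ x. W2sq (Ks n x) (K x) \<partial>torus) + ennreal (\<delta>\<^sup>2 * L\<^sup>2 / 4)"
    proof (rule nn_integral_affine_minorant_le[OF torus.prob_space_axioms _ \<open>0 < \<delta>\<close>])
      fix x :: "real^'d" assume x: "x \<in> space torus"
      note fibres = disintegration_real_distribution[OF disint_seq[of n] x] disintegration_real_distribution[OF disint x]
      have "0 \<le> L" "\<And>s t. \<bar>cts_step a b s - cts_step a b t\<bar> \<le> L * \<bar>s - t\<bar>" "\<And>t. \<bar>cts_step a b t\<bar> \<le> 1"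
        using \<open>a < b\<close> cts_step_lipschitz cts_step_bounds by (auto simp: L_def)
      note separation = lipschitz_integral_diff_le_W2sq[OF fibres cts_step_measurable this(3,2,1)]
      show "ennreal (\<delta> * h n x - \<delta>\<^sup>2 * L\<^sup>2 / 4) \<le> W2sq (Ks n x) (K x)"
        using separation[of \<delta>] separation[of "- \<delta>"] unfolding h_def
        by (cases "0 \<le> (\<integral> t. cts_step a b t \<partial>Ks n x) - (\<integral> t. cts_step a b t \<partial>K x)")
          (simp_all add: algebra_simps)
    qed simp_all
    also have "\<dots> \<le> ennreal (\<delta>\<^sup>2 + \<delta>\<^sup>2 * L\<^sup>2 / 4)"
    proof -
      have "(1/4::real)^n = \<delta>\<^sup>2" by (simp add: \<delta>_def power2_eq_square power_mult_distrib[symmetric])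
      then show ?thesis using fast[of n] by (simp add: ennreal_plus add_right_mono)
    qed
    also have "\<dots> = ennreal \<delta> * ennreal ((1 + L\<^sup>2 / 4) * (1/2)^n)"
    proof -
      have "\<delta>\<^sup>2 + \<delta>\<^sup>2 * L\<^sup>2 / 4 = \<delta> * ((1 + L\<^sup>2 / 4) * (1/2)^n)"
        by (simp add: \<delta>_def power2_eq_square algebra_simps)
      then show ?thesis using \<open>0 < \<delta>\<close> by (simp add: ennreal_mult')
    qed
    finally show ?thesis
      using \<open>0 < \<delta>\<close> by (simp add: ennreal_mult_le_mult_iff)
  qed
  have "AE x in torus. (\<lambda>n. h n x) \<longlonglongrightarrow> 0"
  proof (rule AE_tendsto_zero_of_nn_integral_geometric[OF _ _ bound])
    show "h n \<in> borel_measurable torus" "0 \<le> h n x" for n x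
      by (measurable, simp add: h_def)
  qed simp
  then show ?thesis
    by eventually_elim (simp add: h_def tendsto_rabs_zero_iff LIM_zero_iff)
qed

lemma AE_weakly_conv_of_fast_W2sq:
  assumes fast: "\<And>n. (\<integral>\<^sup>+ x. W2sq (Ks n x) (K x) \<partial>torus) \<le> ennreal ((1/4)^n)"
  shows "AE x in torus. weakly_conv (\<lambda>n. Ks n x) (K x)"
proof -
  have "AE x in torus. \<forall>q\<in>\<rat> \<times> \<rat>. fst q < snd q \<longrightarrow>
      (\<lambda>n. \<integral> t. cts_step (fst q) (snd q) t \<partial>Ks n x) \<longlonglongrightarrow> (\<integral> t. cts_step (fst q) (snd q) t \<partial>K x)"
  proof (subst AE_ball_countable)
    show "countable (\<rat> \<times> \<rat>)" by (intro countable_SIGMA countable_rat)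
    show "\<forall>q\<in>\<rat> \<times> \<rat>. AE x in torus. fst q < snd q \<longrightarrow>
      (\<lambda>n. \<integral> t. cts_step (fst q) (snd q) t \<partial>Ks n x) \<longlonglongrightarrow> (\<integral> t. cts_step (fst q) (snd q) t \<partial>K x)"
      using AE_cts_step_integral_tendsto[OF fast] by (auto elim: AE_mp)
  qed
  then show ?thesis
    using AE_space
  proof eventually_elim
    case (elim x)
    note fibres = disintegration_real_distribution[OF disint_seq elim(2)] disintegration_real_distribution[OF disint elim(2)]
    have "weak_conv_m (\<lambda>n. Ks n x) (K x)"
      by (rule weak_conv_m_of_rat_cts_step[OF fibres]) (use elim(1) in auto)
    then show ?case by (simp add: weakly_conv_iff_weak_conv_m fibres)
  qed
qed

lemma integral_tail_sq_tendsto: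
  assumes sq: "(\<lambda>n. \<integral> z. (snd z)\<^sup>2 \<partial>\<mu>s n) \<longlonglongrightarrow> (\<integral> z. (snd z)\<^sup>2 \<partial>\<mu>)"
    and weak: "AE x in torus. weakly_conv (\<lambda>n. Ks n x) (K x)"
  shows "(\<lambda>n. \<integral> z. tail_sq R (snd z) \<partial>\<mu>s n) \<longlonglongrightarrow> (\<integral> z. tail_sq R (snd z) \<partial>\<mu>)"
proof -
  interpret torus: prob_space "torus :: (real^'d) measure" by (rule prob_space_torus[OF P2L])
  let ?trunc = "\<lambda>t::real. min (t\<^sup>2) (R\<^sup>2)"
  have tail_sq_eq: "tail_sq R t = t\<^sup>2 - ?trunc t" for t
    by (simp add: tail_sq_def min_def max_def)
  have truncated: "(\<integral> z. ?trunc (snd z) \<partial>\<nu>) = (\<integral> x. (\<integral> t. ?trunc t \<partial>L x) \<partial>torus)"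
    and tail: "(\<integral> z. tail_sq R (snd z) \<partial>\<nu>) = (\<integral> z. (snd z)\<^sup>2 \<partial>\<nu>) - (\<integral> z. ?trunc (snd z) \<partial>\<nu>)"
    if "\<nu> \<in> P2L" "disintegration \<nu> L" for \<nu> and L :: "real^'d \<Rightarrow> real measure"
  proof -
    show "(\<integral> z. ?trunc (snd z) \<partial>\<nu>) = (\<integral> x. (\<integral> t. ?trunc t \<partial>L x) \<partial>torus)"
      by (rule integral_snd_disintegration[OF that, where B="R\<^sup>2"]) auto
    interpret prob_space \<nu> by (rule P2L_prob_space[OF that(1)])
    have "integrable \<nu> (\<lambda>z. ?trunc (snd z))"
      by (rule integrable_const_bound[where B="R\<^sup>2"]) (auto intro: P2L_measurable[OF that(1)])
    then show "(\<integral> z. tail_sq R (snd z) \<partial>\<nu>) = (\<integral> z. (snd z)\<^sup>2 \<partial>\<nu>) - (\<integral> z. ?trunc (snd z) \<partial>\<nu>)"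
      unfolding tail_sq_eq by (rule Bochner_Integration.integral_diff[OF integrable_snd_sq[OF that(1)]])
  qed
  have "(\<lambda>n. \<integral> x. (\<integral> t. ?trunc t \<partial>Ks n x) \<partial>torus) \<longlonglongrightarrow> (\<integral> x. (\<integral> t. ?trunc t \<partial>K x) \<partial>torus)"
  proof (rule integral_dominated_convergence[where w="\<lambda>_. R\<^sup>2"])
    show "AE x in torus. norm (\<integral> t. ?trunc t \<partial>Ks n x) \<le> R\<^sup>2" for n
    proof (rule AE_I2)
      fix x :: "real^'d" assume "x \<in> space torus"
      then interpret real_distribution "Ks n x" by (rule disintegration_real_distribution[OF disint_seq])
      have "integrable (Ks n x) ?trunc" by (rule integrable_const_bound[where B="R\<^sup>2"]) auto
      then show "norm (\<integral> t. ?trunc t \<partial>Ks n x) \<le> R\<^sup>2"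
        using integral_le_const[of ?trunc "R\<^sup>2"] by simp
    qed
    have test_function: "continuous_on UNIV ?trunc" "bounded (range ?trunc)"
      by (intro continuous_intros) (auto intro!: boundedI[where B="R\<^sup>2"])
    show "AE x in torus. (\<lambda>n. \<integral> t. ?trunc t \<partial>Ks n x) \<longlonglongrightarrow> (\<integral> t. ?trunc t \<partial>K x)"
      using weak unfolding weakly_conv_def by eventually_elim (use test_function in blast)
  qed (use disint_seq disint in simp_all)
  then show ?thesis
    unfolding tail[OF P2L_seq disint_seq] tail[OF P2L disint]
      truncated[OF P2L_seq disint_seq] truncated[OF P2L disint]
    by (intro tendsto_diff sq)
qed

lemma eventually_nn_integral_W2sq_le_tails:
  assumes weak: "AE x in torus. weakly_conv (\<lambda>n. Ks n x) (K x)" and "0 < e"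
  shows "eventually (\<lambda>n. (\<integral>\<^sup>+ x. W2sq (Ks n x) (K x) \<partial>torus) \<le>
    ennreal (2 * (\<integral> z. tail_sq R (snd z) \<partial>\<mu>s n) + 2 * (\<integral> z. tail_sq R (snd z) \<partial>\<mu>) + e)) sequentially"
proof -
  interpret torus: prob_space "torus :: (real^'d) measure" by (rule prob_space_torus[OF P2L])
  define h where "h n x = 2 * tail_moment R (Ks n x) + 2 * tail_moment R (K x)" for n x
  have "eventually (\<lambda>n. (\<integral>\<^sup>+ x. W2sq (Ks n x) (K x) \<partial>torus) \<le> (\<integral>\<^sup>+ x. h n x \<partial>torus) + ennreal e) sequentially"
  proof (rule nn_integral_eventually_le_of_vanishing_excess[where C="4 * R\<^sup>2"])
    show "(\<integral>\<^sup>+ x. W2sq (Ks n x) (K x) \<partial>torus) < \<infinity>" for n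
      by (rule nn_integral_W2sq_finite[OF P2L disint P2L_seq disint_seq])
    have "AE x in torus. \<forall>n. second_moment (Ks n x) < \<infinity> \<and> second_moment (K x) < \<infinity>"
      unfolding AE_all_countable
      using AE_second_moment_finite[OF P2L disint] AE_second_moment_finite[OF P2L_seq disint_seq]
      by (auto elim: AE_mp)
    then show "AE x in torus. \<forall>n. h n x < \<infinity>"
      by eventually_elim (auto simp: h_def ennreal_mult_less_top intro: le_less_trans[OF tail_moment_le_second_moment])
    show "AE x in torus. \<exists>f. f \<longlonglongrightarrow> 0 \<and> (\<forall>n. f n \<le> ennreal (4 * R\<^sup>2)) \<and>
        (\<forall>n. W2sq (Ks n x) (K x) \<le> f n + h n x)"
      using weak AE_space
    proof eventually_elim
      case (elim x)
      note fibres = disintegration_real_distribution[OF disint_seq elim(2)] disintegration_real_distribution[OF disint elim(2)]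
      show ?case
        using weak_conv_m_W2sq_tail_bound[OF fibres, where R=R] elim(1)
        by (simp add: weakly_conv_iff_weak_conv_m fibres h_def add.assoc)
    qed
  qed (use disint_seq disint \<open>0 < e\<close> in \<open>simp_all add: h_def torus.finite_measure_axioms\<close>)
  moreover have "(\<integral>\<^sup>+ x. h n x \<partial>torus) + ennreal e =
      ennreal (2 * (\<integral> z. tail_sq R (snd z) \<partial>\<mu>s n) + 2 * (\<integral> z. tail_sq R (snd z) \<partial>\<mu>) + e)" for n
  proof -
    have "0 \<le> (\<integral> z. tail_sq R (snd z) \<partial>\<mu>s n)" "0 \<le> (\<integral> z. tail_sq R (snd z) \<partial>\<mu>)"
      by (simp_all add: tail_sq_nonneg)
    with \<open>0 < e\<close> disint_seq disint show ?thesis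
      unfolding h_def
      by (simp add: nn_integral_add nn_integral_cmult ennreal_plus ennreal_mult
          nn_integral_tail_moment_disintegration[OF P2L_seq disint_seq]
          nn_integral_tail_moment_disintegration[OF P2L disint])
  qed
  ultimately show ?thesis by simp
qed

text \<open>Choose \<open>R\<close> with a small tail of \<open>\<mu>\<close> beyond \<open>R\<close>; the tails of \<open>\<mu>s n\<close> converge to it.\<close>
lemma nn_integral_W2sq_tendsto_zero:
  assumes sq: "(\<lambda>n. \<integral> z. (snd z)\<^sup>2 \<partial>\<mu>s n) \<longlonglongrightarrow> (\<integral> z. (snd z)\<^sup>2 \<partial>\<mu>)"
    and weak: "AE x in torus. weakly_conv (\<lambda>n. Ks n x) (K x)"
  shows "(\<lambda>n. \<integral>\<^sup>+ x. W2sq (Ks n x) (K x) \<partial>torus) \<longlonglongrightarrow> 0"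
proof (rule ennreal_tendsto_zeroI)
  fix \<epsilon> :: real assume "0 < \<epsilon>"
  define e where "e = \<epsilon> / 7"
  have "0 < e" using \<open>0 < \<epsilon>\<close> by (simp add: e_def)
  have "snd \<in> borel_measurable \<mu>" by (rule P2L_measurable[OF P2L]) simp
  from LIMSEQ_D[OF integral_tail_sq_tendsto_zero[OF this integrable_snd_sq[OF P2L]] \<open>0 < e\<close>]
  obtain N :: nat where N: "(\<integral> z. tail_sq (real N) (snd z) \<partial>\<mu>) < e"
    by (auto simp: abs_less_iff)
  have "eventually (\<lambda>n. (\<integral> z. tail_sq (real N) (snd z) \<partial>\<mu>s n) < 2 * e) sequentially"
    using N \<open>0 < e\<close> by (intro order_tendstoD(2)[OF integral_tail_sq_tendsto[OF sq weak]]) simp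
  moreover note eventually_nn_integral_W2sq_le_tails[OF weak \<open>0 < e\<close>, where R="real N"]
  ultimately show "eventually (\<lambda>n. (\<integral>\<^sup>+ x. W2sq (Ks n x) (K x) \<partial>torus) \<le> ennreal \<epsilon>) sequentially"
  proof eventually_elim
    case (elim n)
    have "2 * (\<integral> z. tail_sq (real N) (snd z) \<partial>\<mu>s n) + 2 * (\<integral> z. tail_sq (real N) (snd z) \<partial>\<mu>) + e \<le> \<epsilon>"
      using elim(1) N by (simp add: e_def)
    with elim(2) show ?case by (meson ennreal_leI order_trans)
  qed
qed

lemma WL_tendsto_zero_iff:
  "(\<lambda>n. WL (Ks n) K) \<longlonglongrightarrow> 0 \<longleftrightarrow> (\<lambda>n. \<integral>\<^sup>+ x. W2sq (Ks n x) (K x) \<partial>torus) \<longlonglongrightarrow> 0"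
  unfolding WL_eq_nn_integral_W2sq[OF P2L disint P2L_seq disint_seq]
  by (rule sqrt_enn2real_tendsto_zero_iff[OF nn_integral_W2sq_finite[OF P2L disint P2L_seq disint_seq]])

lemma subseq_AE_weakly_conv:
  fixes r :: "nat \<Rightarrow> nat"
  assumes "(\<lambda>n. \<integral>\<^sup>+ x. W2sq (Ks n x) (K x) \<partial>torus) \<longlonglongrightarrow> 0" and "strict_mono r"
  obtains s where "strict_mono s" "AE x in torus. weakly_conv (\<lambda>l. Ks (r (s l)) x) (K x)"
proof -
  have "(\<lambda>n. enn2real (\<integral>\<^sup>+ x. W2sq (Ks (r n) x) (K x) \<partial>torus)) \<longlonglongrightarrow> enn2real 0"
    using LIMSEQ_subseq_LIMSEQ[OF assms] by (intro tendsto_enn2real) (simp_all add: comp_def)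
  then have "(\<lambda>n. enn2real (\<integral>\<^sup>+ x. W2sq (Ks (r n) x) (K x) \<partial>torus)) \<longlonglongrightarrow> 0" by simp
  then obtain s where s: "strict_mono s"
    and fast: "\<And>l. \<bar>enn2real (\<integral>\<^sup>+ x. W2sq (Ks (r (s l)) x) (K x) \<partial>torus)\<bar> < (1/4)^l"
    by (rule LIMSEQ_fast_subseq[where q="1/4"]) simp_all
  interpret sub: disintegrated_P2L_sequence "\<lambda>l. \<mu>s (r (s l))" \<mu> "\<lambda>l. Ks (r (s l))" K
    by (rule subsequence)
  have "(\<integral>\<^sup>+ x. W2sq (Ks (r (s l)) x) (K x) \<partial>torus) \<le> ennreal ((1/4)^l)" for l
    using fast[of l] nn_integral_W2sq_finite[OF P2L disint P2L_seq disint_seq, of "r (s l)"]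
    by (cases "\<integral>\<^sup>+ x. W2sq (Ks (r (s l)) x) (K x) \<partial>torus") (auto intro: ennreal_leI)
  then have "AE x in torus. weakly_conv (\<lambda>l. Ks (r (s l)) x) (K x)"
    by (rule sub.AE_weakly_conv_of_fast_W2sq)
  with s show ?thesis by (rule that)
qed

lemma WL_subseq_tendsto_zero:
  fixes \<phi> :: "nat \<Rightarrow> nat"
  assumes "(\<lambda>n. \<integral> z. (snd z)\<^sup>2 \<partial>\<mu>s n) \<longlonglongrightarrow> (\<integral> z. (snd z)\<^sup>2 \<partial>\<mu>)" and "strict_mono \<phi>"
    and "AE x in torus. weakly_conv (\<lambda>l. Ks (\<phi> l) x) (K x)"
  shows "(\<lambda>l. WL (Ks (\<phi> l)) K) \<longlonglongrightarrow> 0"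
proof -
  interpret sub: disintegrated_P2L_sequence "\<lambda>l. \<mu>s (\<phi> l)" \<mu> "\<lambda>l. Ks (\<phi> l)" K
    by (rule subsequence)
  have "(\<lambda>l. \<integral> z. (snd z)\<^sup>2 \<partial>\<mu>s (\<phi> l)) \<longlonglongrightarrow> (\<integral> z. (snd z)\<^sup>2 \<partial>\<mu>)"
    using LIMSEQ_subseq_LIMSEQ[OF assms(1,2)] by (simp add: comp_def)
  then show ?thesis
    unfolding sub.WL_tendsto_zero_iff by (rule sub.nn_integral_W2sq_tendsto_zero[OF _ assms(3)])
qed

end

theorem mainTheorem10:
  fixes \<mu>s :: "nat \<Rightarrow> ((real ^ 'd) \<times> real) measure"
    and \<mu> :: "((real ^ 'd) \<times> real) measure"
    and Ks :: "nat \<Rightarrow> (real ^ 'd) \<Rightarrow> real measure"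
    and K :: "(real ^ 'd) \<Rightarrow> real measure"
  assumes "\<And>n. \<mu>s n \<in> P2L" and "\<mu> \<in> P2L"
    and "\<And>n. disintegration (\<mu>s n) (Ks n)" and "disintegration \<mu> K"
  shows "(\<lambda>n. WL (Ks n) K) \<longlonglongrightarrow> 0 \<longleftrightarrow>
           ((\<lambda>n. \<integral> z. (snd z)\<^sup>2 \<partial>(\<mu>s n)) \<longlonglongrightarrow> (\<integral> z. (snd z)\<^sup>2 \<partial>\<mu>)) \<and>
           (\<forall>r :: nat \<Rightarrow> nat. strict_mono r \<longrightarrow>
              (\<exists>s :: nat \<Rightarrow> nat. strict_mono s \<and>
                 (\<exists>N. N \<in> null_sets torus \<and>
                    (\<forall>x \<in> torus_set - N. weakly_conv (\<lambda>l. Ks (r (s l)) x) (K x)))))"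
    (is "_ \<longleftrightarrow> ?moments \<and> ?weak")
proof -
  interpret disintegrated_P2L_sequence \<mu>s \<mu> Ks K
    by unfold_locales (fact assms)+
  show ?thesis
  proof
    assume "(\<lambda>n. WL (Ks n) K) \<longlonglongrightarrow> 0"
    then have W0: "(\<lambda>n. \<integral>\<^sup>+ x. W2sq (Ks n x) (K x) \<partial>torus) \<longlonglongrightarrow> 0"
      by (simp add: WL_tendsto_zero_iff)
    have ?weak
    proof (intro allI impI)
      fix r :: "nat \<Rightarrow> nat" assume "strict_mono r"
      from subseq_AE_weakly_conv[OF W0 this] show "\<exists>s. strict_mono s \<and>
          (\<exists>N. N \<in> null_sets torus \<and> (\<forall>x \<in> torus_set - N. weakly_conv (\<lambda>l. Ks (r (s l)) x) (K x)))"
        unfolding AE_torus_iff_null_set by blast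
    qed
    with integral_snd_sq_tendsto[OF W0] show "?moments \<and> ?weak" by blast
  next
    assume "?moments \<and> ?weak"
    show "(\<lambda>n. WL (Ks n) K) \<longlonglongrightarrow> 0"
      unfolding LIMSEQ_iff_subseq_subseq[of "\<lambda>n. WL (Ks n) K"]
    proof (intro allI impI)
      fix r :: "nat \<Rightarrow> nat" assume "strict_mono r"
      with \<open>?moments \<and> ?weak\<close> obtain s where "strict_mono s"
        and "AE x in torus. weakly_conv (\<lambda>l. Ks (r (s l)) x) (K x)"
        unfolding AE_torus_iff_null_set by blast
      moreover have "strict_mono (\<lambda>l. r (s l))"
        using strict_mono_o[OF \<open>strict_mono r\<close> \<open>strict_mono s\<close>] by (simp add: comp_def)
      ultimately show "\<exists>s. strict_mono s \<and> (\<lambda>l. WL (Ks (r (s l))) K) \<longlonglongrightarrow> 0"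
        using WL_subseq_tendsto_zero \<open>?moments \<and> ?weak\<close> by blast
    qed
  qed
qed

end
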